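(* Let $\mathcal{A}$ be an abelian category and $n\ge1$. Suppose given objects $A^k$ ($0\le k\le n+1$) and $B_k^l$ ($0\le k\le n+1$, $1\le l\le n$), with the convention $B_k^0=A^k$, and morphisms $f^k:A^k\to A^{k+1}$ ($0\le k\le n$), $g_k^l:B_k^l\to B_k^{l-1}$ ($1\le l\le n$), $p_k^l:B_k^l\to B_{k+1}^{l+1}$ ($0\le k\le n$, $0\le l\le n-1$; write $p^k=p_k^0$), satisfying $f^k=g_{k+1}^1p^k$, $g_{k+1}^{l+1}p_k^l=p_k^{l-1}g_k^l$ for $1\le l\le n-1$, and $p_k^{n-1}g_k^n=0$. Assume: (a) the sequence $0\to B_{n+1}^n\xrightarrow{g_{n+1}^n}\cdots\xrightarrow{g_{n+1}^2}B_{n+1}^1\xrightarrow{g_{n+1}^1}A^{n+1}\to0$ is exact; (b) for every $k\in\{0,\dots,n\}$, the mapping cone of the morphism of complexes from $B_k^n\to B_k^{n-1}\to\cdots\to B_k^1\to A^k$ to $0\to B_{k+1}^n\to\cdots\to B_{k+1}^2\to B_{k+1}^1$ given by the components $0,p_k^{n-1},\dots,p_k^1,p^k$, i.e. the complex $B_k^n\to B_k^{n-1}\oplus 0\to B_k^{n-2}\oplus B_{k+1}^n\to\cdots\to A^k\oplus B_{k+1}^2\to B_{k+1}^1$, is exact at every term except possibly the last, and its first morphism is a monomorphism. Then the sequence $A^0\xrightarrow{f^0}A^1\to\cdots\xrightarrow{f^n}A^{n+1}\to0$ is exact if and only if for every $k\in\{0,\dots,n\}$ the morphism $[p^k,\ g_{k+1}^2]:A^k\oplus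 B_{k+1}^2\to B_{k+1}^1$ is an epimorphism (with $B_{k+1}^2:=0$ if $n=1$).
   Context: The mapping cone of a morphism of complexes $(h^0,\dots,h^n)$ from $X^0\xrightarrow{d_X^0}\cdots\to X^n$ to $Y^0\xrightarrow{d_Y^0}\cdots\to Y^n$ is the complex $X^0\to X^1\oplus Y^0\to\cdots\to X^n\oplus Y^{n-1}\to Y^n$ with differentials $\begin{pmatrix}-d_X^k&0\\ h^k&d_Y^{k-1}\end{pmatrix}$ (with $d_X^n=0$, $d_Y^{-1}=0$). *)

theory Defs
  imports Main
begin

text \<open>A category with objects of type 'o and morphisms of type 'm, given by
  domain/codomain maps, composition (ccomp C g f = g after f) and identities,
  together with preadditive data: addition, negation and zero morphisms.\<close>

record ('o, 'm) cat =
  Ob    :: "'o set"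
  Mor   :: "'m set"
  cdom  :: "'m \<Rightarrow> 'o"
  ccod  :: "'m \<Rightarrow> 'o"
  ccomp :: "'m \<Rightarrow> 'm \<Rightarrow> 'm"
  cid   :: "'o \<Rightarrow> 'm"
  madd  :: "'m \<Rightarrow> 'm \<Rightarrow> 'm"
  mneg  :: "'m \<Rightarrow> 'm"
  zer   :: "'o \<Rightarrow> 'o \<Rightarrow> 'm"

definition hom :: "('o, 'm) cat \<Rightarrow> 'o \<Rightarrow> 'o \<Rightarrow> 'm set" where
  "hom C X Y = {f \<in> Mor C. cdom C f = X \<and> ccod C f = Y}"

definition category :: "('o, 'm) cat \<Rightarrow> bool" where
  "category C \<longleftrightarrow>
     (\<forall>f\<in>Mor C. cdom C f \<in> Ob C \<and> ccod C f \<in> Ob C) \<and>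
     (\<forall>X\<in>Ob C. cid C X \<in> hom C X X) \<and>
     (\<forall>X Y Z f g. f \<in> hom C X Y \<longrightarrow> g \<in> hom C Y Z \<longrightarrow> ccomp C g f \<in> hom C X Z) \<and>
     (\<forall>W X Y Z f g h. f \<in> hom C W X \<longrightarrow> g \<in> hom C X Y \<longrightarrow> h \<in> hom C Y Z \<longrightarrow>
        ccomp C h (ccomp C g f) = ccomp C (ccomp C h g) f) \<and>
     (\<forall>X Y f. f \<in> hom C X Y \<longrightarrow> ccomp C (cid C Y) f = f \<and> ccomp C f (cid C X) = f)"

definition preadditive :: "('o, 'm) cat \<Rightarrow> bool" where
  "preadditive C \<longleftrightarrow> category C \<and>
     (\<forall>X\<in>Ob C. \<forall>Y\<in>Ob C.
        zer C X Y \<in> hom C X Y \<and>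
        (\<forall>f\<in>hom C X Y. \<forall>g\<in>hom C X Y. madd C f g \<in> hom C X Y) \<and>
        (\<forall>f\<in>hom C X Y. mneg C f \<in> hom C X Y) \<and>
        (\<forall>f\<in>hom C X Y. \<forall>g\<in>hom C X Y. \<forall>h\<in>hom C X Y.
            madd C (madd C f g) h = madd C f (madd C g h)) \<and>
        (\<forall>f\<in>hom C X Y. \<forall>g\<in>hom C X Y. madd C f g = madd C g f) \<and>
        (\<forall>f\<in>hom C X Y. madd C f (zer C X Y) = f) \<and>
        (\<forall>f\<in>hom C X Y. madd C f (mneg C f) = zer C X Y)) \<and>
     (\<forall>X Y Z f g h. f \<in> hom C X Y \<longrightarrow> g \<in> hom C X Y \<longrightarrow> h \<in> hom C Y Z \<longrightarrow>
        ccomp C h (madd C f g) = madd C (ccomp C h f) (ccomp C h g)) \<and>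
     (\<forall>X Y Z f g h. f \<in> hom C X Y \<longrightarrow> g \<in> hom C Y Z \<longrightarrow> h \<in> hom C Y Z \<longrightarrow>
        ccomp C (madd C g h) f = madd C (ccomp C g f) (ccomp C h f))"

definition is_zero_obj :: "('o, 'm) cat \<Rightarrow> 'o \<Rightarrow> bool" where
  "is_zero_obj C Z \<longleftrightarrow> Z \<in> Ob C \<and>
     (\<forall>X\<in>Ob C. (\<exists>!u. u \<in> hom C Z X) \<and> (\<exists>!u. u \<in> hom C X Z))"

definition is_biproduct ::
  "('o, 'm) cat \<Rightarrow> 'o \<Rightarrow> 'o \<Rightarrow> 'o \<Rightarrow> 'm \<Rightarrow> 'm \<Rightarrow> 'm \<Rightarrow> 'm \<Rightarrow> bool" where
  "is_biproduct C X Y S i1 i2 p1 p2 \<longleftrightarrow> S \<in> Ob C \<and>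
     i1 \<in> hom C X S \<and> i2 \<in> hom C Y S \<and> p1 \<in> hom C S X \<and> p2 \<in> hom C S Y \<and>
     ccomp C p1 i1 = cid C X \<and> ccomp C p2 i2 = cid C Y \<and>
     ccomp C p2 i1 = zer C X Y \<and> ccomp C p1 i2 = zer C Y X \<and>
     madd C (ccomp C i1 p1) (ccomp C i2 p2) = cid C S"

definition is_kernel :: "('o, 'm) cat \<Rightarrow> 'm \<Rightarrow> 'm \<Rightarrow> bool" where
  "is_kernel C f k \<longleftrightarrow> f \<in> Mor C \<and> k \<in> Mor C \<and> ccod C k = cdom C f \<and>
     ccomp C f k = zer C (cdom C k) (ccod C f) \<and>
     (\<forall>h\<in>Mor C. ccod C h = cdom C f \<and> ccomp C f h = zer C (cdom C h) (ccod C f) \<longrightarrow>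
        (\<exists>!u. u \<in> hom C (cdom C h) (cdom C k) \<and> ccomp C k u = h))"

definition is_cokernel :: "('o, 'm) cat \<Rightarrow> 'm \<Rightarrow> 'm \<Rightarrow> bool" where
  "is_cokernel C f c \<longleftrightarrow> f \<in> Mor C \<and> c \<in> Mor C \<and> cdom C c = ccod C f \<and>
     ccomp C c f = zer C (cdom C f) (ccod C c) \<and>
     (\<forall>h\<in>Mor C. cdom C h = ccod C f \<and> ccomp C h f = zer C (cdom C f) (ccod C h) \<longrightarrow>
        (\<exists>!u. u \<in> hom C (ccod C c) (ccod C h) \<and> ccomp C u c = h))"

definition is_mono :: "('o, 'm) cat \<Rightarrow> 'm \<Rightarrow> bool" where
  "is_mono C m \<longleftrightarrow> m \<in> Mor C \<and>
     (\<forall>a b. a \<in> Mor C \<and> b \<in> Mor C \<and> cdom C a = cdom C b \<and>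
        ccod C a = cdom C m \<and> ccod C b = cdom C m \<and> ccomp C m a = ccomp C m b \<longrightarrow> a = b)"

definition is_epi :: "('o, 'm) cat \<Rightarrow> 'm \<Rightarrow> bool" where
  "is_epi C e \<longleftrightarrow> e \<in> Mor C \<and>
     (\<forall>a b. a \<in> Mor C \<and> b \<in> Mor C \<and> ccod C a = ccod C b \<and>
        cdom C a = ccod C e \<and> cdom C b = ccod C e \<and> ccomp C a e = ccomp C b e \<longrightarrow> a = b)"

definition abelian_category :: "('o, 'm) cat \<Rightarrow> bool" where
  "abelian_category C \<longleftrightarrow> preadditive C \<and>
     (\<exists>Z. is_zero_obj C Z) \<and>
     (\<forall>X\<in>Ob C. \<forall>Y\<in>Ob C. \<exists>S i1 i2 p1 p2. is_biproduct C X Y S i1 i2 p1 p2) \<and>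
     (\<forall>f\<in>Mor C. \<exists>k. is_kernel C f k) \<and>
     (\<forall>f\<in>Mor C. \<exists>c. is_cokernel C f c) \<and>
     (\<forall>m. is_mono C m \<longrightarrow> (\<exists>f. is_kernel C f m)) \<and>
     (\<forall>e. is_epi C e \<longrightarrow> (\<exists>f. is_cokernel C f e))"

text \<open>Exactness at the middle object of  . -f-> . -g-> . : the image of f
  (a kernel of a cokernel of f) and a kernel of g are the same subobject.\<close>

definition exact :: "('o, 'm) cat \<Rightarrow> 'm \<Rightarrow> 'm \<Rightarrow> bool" where
  "exact C f g \<longleftrightarrow> f \<in> Mor C \<and> g \<in> Mor C \<and> ccod C f = cdom C g \<and>
     (\<forall>c m k. is_cokernel C f c \<and> is_kernel C c m \<and> is_kernel C g k \<longrightarrow>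
        (\<exists>u v. u \<in> hom C (cdom C k) (cdom C m) \<and> v \<in> hom C (cdom C m) (cdom C k) \<and>
               ccomp C m u = k \<and> ccomp C k v = m))"

definition zobj :: "('o, 'm) cat \<Rightarrow> 'o" where
  "zobj C = (SOME Z. is_zero_obj C Z)"

definition bsum_data :: "('o, 'm) cat \<Rightarrow> 'o \<Rightarrow> 'o \<Rightarrow> 'o \<times> 'm \<times> 'm \<times> 'm \<times> 'm" where
  "bsum_data C X Y = (SOME t. case t of (S, i1, i2, p1, p2) \<Rightarrow> is_biproduct C X Y S i1 i2 p1 p2)"

definition bobj :: "('o, 'm) cat \<Rightarrow> 'o \<Rightarrow> 'o \<Rightarrow> 'o" where
  "bobj C X Y = fst (bsum_data C X Y)"
definition binj1 :: "('o, 'm) cat \<Rightarrow> 'o \<Rightarrow> 'o \<Rightarrow> 'm" where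
  "binj1 C X Y = fst (snd (bsum_data C X Y))"
definition binj2 :: "('o, 'm) cat \<Rightarrow> 'o \<Rightarrow> 'o \<Rightarrow> 'm" where
  "binj2 C X Y = fst (snd (snd (bsum_data C X Y)))"
definition bprj1 :: "('o, 'm) cat \<Rightarrow> 'o \<Rightarrow> 'o \<Rightarrow> 'm" where
  "bprj1 C X Y = fst (snd (snd (snd (bsum_data C X Y))))"
definition bprj2 :: "('o, 'm) cat \<Rightarrow> 'o \<Rightarrow> 'o \<Rightarrow> 'm" where
  "bprj2 C X Y = snd (snd (snd (snd (bsum_data C X Y))))"

text \<open>col C Y1 Y2 a b : X \<rightarrow> Y1 \<oplus> Y2 is the column (a; b);
  row C X1 X2 a b : X1 \<oplus> X2 \<rightarrow> Y is the row [a, b];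
  mat C X1 X2 Y1 Y2 a b c d : X1 \<oplus> X2 \<rightarrow> Y1 \<oplus> Y2 is the matrix ((a, b), (c, d)).\<close>

definition col :: "('o, 'm) cat \<Rightarrow> 'o \<Rightarrow> 'o \<Rightarrow> 'm \<Rightarrow> 'm \<Rightarrow> 'm" where
  "col C Y1 Y2 a b = madd C (ccomp C (binj1 C Y1 Y2) a) (ccomp C (binj2 C Y1 Y2) b)"

definition row :: "('o, 'm) cat \<Rightarrow> 'o \<Rightarrow> 'o \<Rightarrow> 'm \<Rightarrow> 'm \<Rightarrow> 'm" where
  "row C X1 X2 a b = madd C (ccomp C a (bprj1 C X1 X2)) (ccomp C b (bprj2 C X1 X2))"

definition mat :: "('o, 'm) cat \<Rightarrow> 'o \<Rightarrow> 'o \<Rightarrow> 'o \<Rightarrow> 'o \<Rightarrow> 'm \<Rightarrow> 'm \<Rightarrow> 'm \<Rightarrow> 'm \<Rightarrow> 'm" where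
  "mat C X1 X2 Y1 Y2 a b c d =
     madd C (ccomp C (col C Y1 Y2 a c) (bprj1 C X1 X2)) (ccomp C (col C Y1 Y2 b d) (bprj2 C X1 X2))"

text \<open>Cone: X^0 \<rightarrow> X^1 \<oplus> Y^0 \<rightarrow> \<dots> \<rightarrow> X^n \<oplus> Y^(n-1) \<rightarrow> Y^n; cone_d C n X Y dX dY h j
  is the differential out of the j-th term (0 \<le> j \<le> n), with matrix
  ((-dX^j, 0), (h^j, dY^(j-1))), where dX^n = 0 and dY^(-1) = 0 (assumes n \<ge> 1).\<close>

definition cone_d :: "('o, 'm) cat \<Rightarrow> nat \<Rightarrow> (nat \<Rightarrow> 'o) \<Rightarrow> (nat \<Rightarrow> 'o) \<Rightarrow>
    (nat \<Rightarrow> 'm) \<Rightarrow> (nat \<Rightarrow> 'm) \<Rightarrow> (nat \<Rightarrow> 'm) \<Rightarrow> nat \<Rightarrow> 'm" where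
  "cone_d C n X Y dX dY h j =
     (if j = 0 then col C (X 1) (Y 0) (mneg C (dX 0)) (h 0)
      else if j < n then
        mat C (X j) (Y (j - 1)) (X (Suc j)) (Y j)
          (mneg C (dX j)) (zer C (Y (j - 1)) (X (Suc j))) (h j) (dY (j - 1))
      else row C (X n) (Y (n - 1)) (h n) (dY (n - 1)))"

end

theory Submission
  imports Defs
begin

text \<open>Elements are chased as generalised elements \<open>T \<rightarrow> X\<close>, refined along epimorphisms
  (\<open>lifts_locally\<close>). Exactness of the mapping cone of (b) says that an element \<open>x\<close> of
  \<open>B\<^sub>k\<^sup>l\<close> with \<open>g x = 0\<close> whose image \<open>p x\<close> is a boundary \<open>g y\<close> in \<open>B\<^sub>k\<^sub>+\<^sub>1\<close> is itself a
  boundary, and that \<open>g\<^sub>k\<^sup>n\<close> is a monomorphism. By descending induction on \<open>k\<close>, starting from the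
  exact row (a), every row \<open>B\<^sub>k\<^sup>n \<rightarrow> \<dots> \<rightarrow> B\<^sub>k\<^sup>1 \<rightarrow> A\<^sup>k\<close> is then exact at \<open>B\<^sub>k\<^sup>l\<close> for \<open>0 < l < n\<close>.
  Since \<open>f\<^sup>k = g\<^sub>k\<^sub>+\<^sub>1\<^sup>1 p\<^sup>k\<close>, an element \<open>b\<close> of \<open>B\<^sub>k\<^sub>+\<^sub>1\<^sup>1\<close> lifts along \<open>[p\<^sup>k, g\<^sub>k\<^sub>+\<^sub>1\<^sup>2]\<close> exactly when
  \<open>g\<^sub>k\<^sub>+\<^sub>1\<^sup>1 b\<close> lifts along \<open>f\<^sup>k\<close>; as the kernel of \<open>f\<^sup>k\<^sup>+\<^sup>1\<close> is the image of \<open>g\<^sub>k\<^sub>+\<^sub>1\<^sup>1\<close> and \<open>g\<^sub>n\<^sub>+\<^sub>1\<^sup>1\<close>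
  is epi, exactness at \<open>A\<^sup>k\<^sup>+\<^sup>1\<close> (resp. \<open>f\<^sup>n\<close> being epi) is equivalent to
  \<open>[p\<^sup>k, g\<^sub>k\<^sub>+\<^sub>1\<^sup>2]\<close> being an epimorphism.\<close>

section \<open>Preadditive categories\<close>

locale abelian =
  fixes C :: "('o, 'm) cat"
  assumes abelian: "abelian_category C"
begin

lemma preadditive: "preadditive C"
  using abelian unfolding abelian_category_def by blast

lemma category: "category C"
  using preadditive unfolding preadditive_def by blast

lemma category_axioms:
  shows "\<forall>f\<in>Mor C. cdom C f \<in> Ob C \<and> ccod C f \<in> Ob C"
    and "\<forall>X\<in>Ob C. cid C X \<in> hom C X X"
    and "\<forall>X Y Z f g. f \<in> hom C X Y \<longrightarrow> g \<in> hom C Y Z \<longrightarrow> ccomp C g f \<in> hom C X Z"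
    and "\<forall>W X Y Z f g h. f \<in> hom C W X \<longrightarrow> g \<in> hom C X Y \<longrightarrow> h \<in> hom C Y Z \<longrightarrow>
           ccomp C h (ccomp C g f) = ccomp C (ccomp C h g) f"
    and "\<forall>X Y f. f \<in> hom C X Y \<longrightarrow> ccomp C (cid C Y) f = f \<and> ccomp C f (cid C X) = f"
  using category unfolding category_def by argo+

lemma hom_dom_ob: "f \<in> hom C X Y \<Longrightarrow> X \<in> Ob C"
  using category_axioms(1) unfolding hom_def by blast

lemma hom_cod_ob: "f \<in> hom C X Y \<Longrightarrow> Y \<in> Ob C"
  using category_axioms(1) unfolding hom_def by blast

lemma comp_hom [intro]: "f \<in> hom C X Y \<Longrightarrow> g \<in> hom C Y Z \<Longrightarrow> ccomp C g f \<in> hom C X Z"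
  using category_axioms(3) by blast

lemma comp_assoc:
  "f \<in> hom C W X \<Longrightarrow> g \<in> hom C X Y \<Longrightarrow> h \<in> hom C Y Z \<Longrightarrow>
   ccomp C (ccomp C h g) f = ccomp C h (ccomp C g f)"
  using category_axioms(4) by metis

lemma id_hom [intro]: "X \<in> Ob C \<Longrightarrow> cid C X \<in> hom C X X"
  using category_axioms(2) by blast

lemma comp_id_left: "f \<in> hom C X Y \<Longrightarrow> ccomp C (cid C Y) f = f"
  using category_axioms(5) by blast

lemma comp_id_right: "f \<in> hom C X Y \<Longrightarrow> ccomp C f (cid C X) = f"
  using category_axioms(5) by blast

lemma preadditive_axioms:
  shows "\<forall>X\<in>Ob C. \<forall>Y\<in>Ob C.
        zer C X Y \<in> hom C X Y \<and>
        (\<forall>f\<in>hom C X Y. \<forall>g\<in>hom C X Y. madd C f g \<in> hom C X Y) \<and>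
        (\<forall>f\<in>hom C X Y. mneg C f \<in> hom C X Y) \<and>
        (\<forall>f\<in>hom C X Y. \<forall>g\<in>hom C X Y. \<forall>h\<in>hom C X Y.
            madd C (madd C f g) h = madd C f (madd C g h)) \<and>
        (\<forall>f\<in>hom C X Y. \<forall>g\<in>hom C X Y. madd C f g = madd C g f) \<and>
        (\<forall>f\<in>hom C X Y. madd C f (zer C X Y) = f) \<and>
        (\<forall>f\<in>hom C X Y. madd C f (mneg C f) = zer C X Y)"
    and "\<forall>X Y Z f g h. f \<in> hom C X Y \<longrightarrow> g \<in> hom C X Y \<longrightarrow> h \<in> hom C Y Z \<longrightarrow>
        ccomp C h (madd C f g) = madd C (ccomp C h f) (ccomp C h g)"
    and "\<forall>X Y Z f g h. f \<in> hom C X Y \<longrightarrow> g \<in> hom C Y Z \<longrightarrow> h \<in> hom C Y Z \<longrightarrow>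
        ccomp C (madd C g h) f = madd C (ccomp C g f) (ccomp C h f)"
  using preadditive unfolding preadditive_def by argo+

lemma hom_group_axioms:
  assumes "X \<in> Ob C" "Y \<in> Ob C"
  shows "zer C X Y \<in> hom C X Y"
    and "\<forall>f\<in>hom C X Y. \<forall>g\<in>hom C X Y. madd C f g \<in> hom C X Y"
    and "\<forall>f\<in>hom C X Y. mneg C f \<in> hom C X Y"
    and "\<forall>f\<in>hom C X Y. \<forall>g\<in>hom C X Y. \<forall>h\<in>hom C X Y.
           madd C (madd C f g) h = madd C f (madd C g h)"
    and "\<forall>f\<in>hom C X Y. \<forall>g\<in>hom C X Y. madd C f g = madd C g f"
    and "\<forall>f\<in>hom C X Y. madd C f (zer C X Y) = f"
    and "\<forall>f\<in>hom C X Y. madd C f (mneg C f) = zer C X Y"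
  using preadditive_axioms(1) assms by blast+

lemma zer_hom [intro]: "X \<in> Ob C \<Longrightarrow> Y \<in> Ob C \<Longrightarrow> zer C X Y \<in> hom C X Y"
  using hom_group_axioms(1) by blast

lemma add_hom [intro]: "f \<in> hom C X Y \<Longrightarrow> g \<in> hom C X Y \<Longrightarrow> madd C f g \<in> hom C X Y"
  using hom_group_axioms(2) hom_dom_ob hom_cod_ob by blast

lemma neg_hom [intro]: "f \<in> hom C X Y \<Longrightarrow> mneg C f \<in> hom C X Y"
  using hom_group_axioms(3) hom_dom_ob hom_cod_ob by blast

lemma add_assoc:
  "f \<in> hom C X Y \<Longrightarrow> g \<in> hom C X Y \<Longrightarrow> h \<in> hom C X Y \<Longrightarrow>
   madd C (madd C f g) h = madd C f (madd C g h)"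
  using hom_group_axioms(4) hom_dom_ob hom_cod_ob by blast

lemma add_commute: "f \<in> hom C X Y \<Longrightarrow> g \<in> hom C X Y \<Longrightarrow> madd C f g = madd C g f"
  using hom_group_axioms(5) hom_dom_ob hom_cod_ob by blast

lemma add_zer_right: "f \<in> hom C X Y \<Longrightarrow> madd C f (zer C X Y) = f"
  using hom_group_axioms(6) hom_dom_ob hom_cod_ob by blast

lemma add_neg_right: "f \<in> hom C X Y \<Longrightarrow> madd C f (mneg C f) = zer C X Y"
  using hom_group_axioms(7) hom_dom_ob hom_cod_ob by blast

lemma comp_add_left:
  "f \<in> hom C X Y \<Longrightarrow> g \<in> hom C X Y \<Longrightarrow> h \<in> hom C Y Z \<Longrightarrow>
   ccomp C h (madd C f g) = madd C (ccomp C h f) (ccomp C h g)"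
  using preadditive_axioms(2) by blast

lemma comp_add_right:
  "f \<in> hom C X Y \<Longrightarrow> g \<in> hom C Y Z \<Longrightarrow> h \<in> hom C Y Z \<Longrightarrow>
   ccomp C (madd C g h) f = madd C (ccomp C g f) (ccomp C h f)"
  using preadditive_axioms(3) by blast

lemma add_zer_left: "f \<in> hom C X Y \<Longrightarrow> madd C (zer C X Y) f = f"
  using add_commute[OF _ zer_hom[OF hom_dom_ob hom_cod_ob]] add_zer_right by simp

lemma add_neg_left: "f \<in> hom C X Y \<Longrightarrow> madd C (mneg C f) f = zer C X Y"
  using add_commute[OF neg_hom] add_neg_right by simp

lemma add_left_cancel:
  assumes a: "a \<in> hom C X Y" and b: "b \<in> hom C X Y" and c: "c \<in> hom C X Y"
    and eq: "madd C a b = madd C a c"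
  shows "b = c"
proof -
  have na: "mneg C a \<in> hom C X Y" using a by blast
  have "b = madd C (madd C (mneg C a) a) b" using add_neg_left[OF a] add_zer_left[OF b] by simp
  also have "\<dots> = madd C (madd C (mneg C a) a) c" using add_assoc[OF na a] b c eq by simp
  also have "\<dots> = c" using add_neg_left[OF a] add_zer_left[OF c] by simp
  finally show ?thesis .
qed

lemma neg_unique:
  assumes a: "a \<in> hom C X Y" and b: "b \<in> hom C X Y" and sum: "madd C a b = zer C X Y"
  shows "b = mneg C a"
  using add_left_cancel[OF a b neg_hom[OF a]] sum add_neg_right[OF a] by simp

lemma neg_neg:
  assumes a: "a \<in> hom C X Y"
  shows "mneg C (mneg C a) = a"
  using neg_unique[OF neg_hom[OF a] a add_neg_left[OF a]] by simp

lemma eq_of_add_neg_eq_zer: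
  assumes a: "a \<in> hom C X Y" and b: "b \<in> hom C X Y" and diff: "madd C a (mneg C b) = zer C X Y"
  shows "a = b"
proof -
  have "madd C (mneg C b) a = zer C X Y" using diff add_commute[OF a neg_hom[OF b]] by simp
  then show ?thesis using neg_unique[OF neg_hom[OF b] a] neg_neg[OF b] by simp
qed

lemma eq_add_of_add_neg_eq:
  assumes u: "u \<in> hom C X Y" and v: "v \<in> hom C X Y"
    and diff: "madd C u (mneg C v) = w"
  shows "u = madd C v w"
proof -
  have nv: "mneg C v \<in> hom C X Y" using v by blast
  have "madd C v w = madd C v (madd C (mneg C v) u)" using diff add_commute[OF u nv] by simp
  also have "\<dots> = madd C (madd C v (mneg C v)) u" using add_assoc[OF v nv u] by simp
  also have "\<dots> = u" using add_neg_right[OF v] add_zer_left[OF u] by simp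
  finally show ?thesis by simp
qed

lemma neg_zer:
  assumes "X \<in> Ob C" "Y \<in> Ob C"
  shows "mneg C (zer C X Y) = zer C X Y"
proof -
  have z: "zer C X Y \<in> hom C X Y" using assms by blast
  show ?thesis using neg_unique[OF z z add_zer_right[OF z]] by simp
qed

lemma neg_eq_zer_iff:
  assumes a: "a \<in> hom C X Y"
  shows "mneg C a = zer C X Y \<longleftrightarrow> a = zer C X Y"
  using neg_neg[OF a] neg_zer[OF hom_dom_ob[OF a] hom_cod_ob[OF a]] by metis

text \<open>Composition with zero follows from bilinearity: \<open>h \<circ> 0 + h \<circ> 0 = h \<circ> 0\<close>.\<close>

lemma comp_zer_right:
  assumes h: "h \<in> hom C Y Z" and X: "X \<in> Ob C"
  shows "ccomp C h (zer C X Y) = zer C X Z"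
proof -
  have z: "zer C X Y \<in> hom C X Y" using X hom_dom_ob[OF h] by blast
  have hz: "ccomp C h (zer C X Y) \<in> hom C X Z" using z h by blast
  have "madd C (ccomp C h (zer C X Y)) (ccomp C h (zer C X Y))
        = madd C (ccomp C h (zer C X Y)) (zer C X Z)"
    using comp_add_left[OF z z h] add_zer_right[OF z] add_zer_right[OF hz] by simp
  then show ?thesis using add_left_cancel[OF hz hz zer_hom[OF X hom_cod_ob[OF h]]] by simp
qed

lemma comp_zer_left:
  assumes f: "f \<in> hom C X Y" and Z: "Z \<in> Ob C"
  shows "ccomp C (zer C Y Z) f = zer C X Z"
proof -
  have z: "zer C Y Z \<in> hom C Y Z" using Z hom_cod_ob[OF f] by blast
  have zf: "ccomp C (zer C Y Z) f \<in> hom C X Z" using z f by blast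
  have "madd C (ccomp C (zer C Y Z) f) (ccomp C (zer C Y Z) f)
        = madd C (ccomp C (zer C Y Z) f) (zer C X Z)"
    using comp_add_right[OF f z z] add_zer_right[OF z] add_zer_right[OF zf] by simp
  then show ?thesis using add_left_cancel[OF zf zf zer_hom[OF hom_dom_ob[OF f] Z]] by simp
qed

lemma comp_neg_right:
  assumes f: "f \<in> hom C X Y" and h: "h \<in> hom C Y Z"
  shows "ccomp C h (mneg C f) = mneg C (ccomp C h f)"
  using neg_unique[OF comp_hom[OF f h] comp_hom[OF neg_hom[OF f] h]]
    comp_add_left[OF f neg_hom[OF f] h] add_neg_right[OF f] comp_zer_right[OF h hom_dom_ob[OF f]]
  by simp

lemma comp_neg_left:
  assumes f: "f \<in> hom C X Y" and h: "h \<in> hom C Y Z"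
  shows "ccomp C (mneg C h) f = mneg C (ccomp C h f)"
  using neg_unique[OF comp_hom[OF f h] comp_hom[OF f neg_hom[OF h]]]
    comp_add_right[OF f h neg_hom[OF h]] add_neg_right[OF h] comp_zer_left[OF f hom_cod_ob[OF h]]
  by simp

section \<open>Monomorphisms, epimorphisms, kernels and cokernels\<close>

lemma mono_cancel:
  assumes "is_mono C m" "m \<in> hom C X Y" "a \<in> hom C T X" "b \<in> hom C T X"
    "ccomp C m a = ccomp C m b"
  shows "a = b"
  using assms unfolding is_mono_def hom_def by auto

lemma mono_eq_zer:
  assumes m: "is_mono C m" "m \<in> hom C X Y" and x: "x \<in> hom C T X"
    and mx: "ccomp C m x = zer C T Y"
  shows "x = zer C T X"
  using mono_cancel[OF m x zer_hom[OF hom_dom_ob[OF x] hom_cod_ob[OF x]]] mx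
    comp_zer_right[OF m(2) hom_dom_ob[OF x]] by simp

lemma epi_cancel:
  assumes "e \<in> hom C X Y" "is_epi C e" "a \<in> hom C Y W" "b \<in> hom C Y W"
    "ccomp C a e = ccomp C b e"
  shows "a = b"
  using assms unfolding is_epi_def hom_def by auto

lemma epi_eq_zer:
  assumes e: "e \<in> hom C X Y" "is_epi C e" and u: "u \<in> hom C Y W"
    and ue: "ccomp C u e = zer C X W"
  shows "u = zer C Y W"
  using epi_cancel[OF e u zer_hom[OF hom_dom_ob[OF u] hom_cod_ob[OF u]]] ue
    comp_zer_left[OF e(1) hom_cod_ob[OF u]] by simp

lemma epiI:
  assumes e: "e \<in> hom C X Y"
    and zero: "\<And>W u. u \<in> hom C Y W \<Longrightarrow> ccomp C u e = zer C X W \<Longrightarrow> u = zer C Y W"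
  shows "is_epi C e"
  unfolding is_epi_def
proof (intro conjI allI impI)
  show "e \<in> Mor C" using e by (simp add: hom_def)
  fix a b
  assume ab: "a \<in> Mor C \<and> b \<in> Mor C \<and> ccod C a = ccod C b \<and>
    cdom C a = ccod C e \<and> cdom C b = ccod C e \<and> ccomp C a e = ccomp C b e"
  then have a: "a \<in> hom C Y (ccod C a)" and b: "b \<in> hom C Y (ccod C a)"
    using e by (auto simp: hom_def)
  have "ccomp C (madd C a (mneg C b)) e = madd C (ccomp C b e) (mneg C (ccomp C b e))"
    using comp_add_right[OF e a neg_hom[OF b]] comp_neg_left[OF e b] ab by simp
  also have "\<dots> = zer C X (ccod C a)" using add_neg_right[OF comp_hom[OF e b]] .
  finally show "a = b"
    using zero[OF add_hom[OF a neg_hom[OF b]]] eq_of_add_neg_eq_zer[OF a b] by blast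
qed

lemma epi_comp:
  assumes e1: "e1 \<in> hom C X Y" "is_epi C e1" and e2: "e2 \<in> hom C Y Z" "is_epi C e2"
  shows "is_epi C (ccomp C e2 e1)"
proof (rule epiI)
  show "ccomp C e2 e1 \<in> hom C X Z" using comp_hom[OF e1(1) e2(1)] .
  fix W u assume u: "u \<in> hom C Z W" and ue: "ccomp C u (ccomp C e2 e1) = zer C X W"
  have "ccomp C (ccomp C u e2) e1 = zer C X W" using ue comp_assoc[OF e1(1) e2(1) u] by simp
  then have "ccomp C u e2 = zer C Y W" using epi_eq_zer[OF e1 comp_hom[OF e2(1) u]] by blast
  then show "u = zer C Z W" using epi_eq_zer[OF e2 u] by blast
qed

lemma epi_neg:
  assumes e: "e \<in> hom C X Y" "is_epi C e"
  shows "is_epi C (mneg C e)"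
proof (rule epiI[OF neg_hom[OF e(1)]])
  fix W u assume u: "u \<in> hom C Y W" and "ccomp C u (mneg C e) = zer C X W"
  then have "ccomp C u e = zer C X W"
    using comp_neg_right[OF e(1) u] neg_eq_zer_iff[OF comp_hom[OF e(1) u]] by simp
  then show "u = zer C Y W" using epi_eq_zer[OF e u] by blast
qed

lemma mono_comp:
  assumes m1: "is_mono C m1" "m1 \<in> hom C X Y" and m2: "is_mono C m2" "m2 \<in> hom C Y Z"
  shows "is_mono C (ccomp C m2 m1)"
  unfolding is_mono_def
proof (intro conjI allI impI)
  show "ccomp C m2 m1 \<in> Mor C" using comp_hom[OF m1(2) m2(2)] by (simp add: hom_def)
  fix a b
  assume ab: "a \<in> Mor C \<and> b \<in> Mor C \<and> cdom C a = cdom C b \<and>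
    ccod C a = cdom C (ccomp C m2 m1) \<and> ccod C b = cdom C (ccomp C m2 m1) \<and>
    ccomp C (ccomp C m2 m1) a = ccomp C (ccomp C m2 m1) b"
  then have a: "a \<in> hom C (cdom C a) X" and b: "b \<in> hom C (cdom C a) X"
    using comp_hom[OF m1(2) m2(2)] by (auto simp: hom_def)
  have "ccomp C m2 (ccomp C m1 a) = ccomp C m2 (ccomp C m1 b)"
    using ab comp_assoc[OF a m1(2) m2(2)] comp_assoc[OF b m1(2) m2(2)] by simp
  then have "ccomp C m1 a = ccomp C m1 b"
    using mono_cancel[OF m2 comp_hom[OF a m1(2)] comp_hom[OF b m1(2)]] by blast
  then show "a = b" using mono_cancel[OF m1 a b] by blast
qed

lemma id_epi:
  assumes X: "X \<in> Ob C"
  shows "is_epi C (cid C X)"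
proof (rule epiI[OF id_hom[OF X]])
  fix W u assume "u \<in> hom C X W" "ccomp C u (cid C X) = zer C X W"
  then show "u = zer C X W" using comp_id_right by simp
qed

lemma is_kernelD:
  assumes "is_kernel C f k"
  shows "f \<in> Mor C" and "k \<in> Mor C" and "ccod C k = cdom C f"
    and "ccomp C f k = zer C (cdom C k) (ccod C f)"
    and "\<forall>h\<in>Mor C. ccod C h = cdom C f \<and> ccomp C f h = zer C (cdom C h) (ccod C f) \<longrightarrow>
           (\<exists>!u. u \<in> hom C (cdom C h) (cdom C k) \<and> ccomp C k u = h)"
  using assms unfolding is_kernel_def by argo+

lemma is_cokernelD:
  assumes "is_cokernel C f c"
  shows "f \<in> Mor C" and "c \<in> Mor C" and "cdom C c = ccod C f"
    and "ccomp C c f = zer C (cdom C f) (ccod C c)"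
    and "\<forall>h\<in>Mor C. cdom C h = ccod C f \<and> ccomp C h f = zer C (cdom C f) (ccod C h) \<longrightarrow>
           (\<exists>!u. u \<in> hom C (ccod C c) (ccod C h) \<and> ccomp C u c = h)"
  using assms unfolding is_cokernel_def by argo+

lemma kernel_hom: "is_kernel C f k \<Longrightarrow> f \<in> hom C X Y \<Longrightarrow> k \<in> hom C (cdom C k) X"
  using is_kernelD(2,3) by (auto simp: hom_def)

lemma kernel_comp_zer: "is_kernel C f k \<Longrightarrow> f \<in> hom C X Y \<Longrightarrow> ccomp C f k = zer C (cdom C k) Y"
  using is_kernelD(4) by (auto simp: hom_def)

lemma kernel_factor:
  assumes k: "is_kernel C f k" and f: "f \<in> hom C X Y" and h: "h \<in> hom C T X"
    and fh: "ccomp C f h = zer C T Y"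
  shows "\<exists>u. u \<in> hom C T (cdom C k) \<and> ccomp C k u = h"
proof -
  have "h \<in> Mor C" "ccod C h = cdom C f" "ccomp C f h = zer C (cdom C h) (ccod C f)"
    "cdom C h = T" using f h fh by (simp_all add: hom_def)
  then show ?thesis using is_kernelD(5)[OF k] by blast
qed

lemma kernel_mono:
  assumes k: "is_kernel C f k"
  shows "is_mono C k"
  unfolding is_mono_def
proof (intro conjI allI impI)
  show "k \<in> Mor C" using is_kernelD(2)[OF k] .
  have f: "f \<in> hom C (cdom C f) (ccod C f)" using is_kernelD(1)[OF k] by (simp add: hom_def)
  have kh: "k \<in> hom C (cdom C k) (cdom C f)" using kernel_hom[OF k f] .
  fix a b
  assume ab: "a \<in> Mor C \<and> b \<in> Mor C \<and> cdom C a = cdom C b \<and>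
    ccod C a = cdom C k \<and> ccod C b = cdom C k \<and> ccomp C k a = ccomp C k b"
  then have a: "a \<in> hom C (cdom C a) (cdom C k)" and b: "b \<in> hom C (cdom C a) (cdom C k)"
    by (auto simp: hom_def)
  have ka: "ccomp C k a \<in> hom C (cdom C a) (cdom C f)" using a kh by blast
  have "ccomp C f (ccomp C k a) = ccomp C (ccomp C f k) a" using comp_assoc[OF a kh f] by simp
  also have "\<dots> = zer C (cdom C a) (ccod C f)"
    using kernel_comp_zer[OF k f] comp_zer_left[OF a hom_cod_ob[OF f]] by simp
  finally have "ccomp C f (ccomp C k a) = zer C (cdom C a) (ccod C f)" .
  moreover have "ccomp C k a \<in> Mor C" "ccod C (ccomp C k a) = cdom C f"
    "cdom C (ccomp C k a) = cdom C a" using ka by (simp_all add: hom_def)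
  ultimately have "\<exists>!u. u \<in> hom C (cdom C a) (cdom C k) \<and> ccomp C k u = ccomp C k a"
    using is_kernelD(5)[OF k, rule_format, of "ccomp C k a"] by simp
  moreover have "a \<in> hom C (cdom C a) (cdom C k) \<and> ccomp C k a = ccomp C k a" using a by simp
  moreover have "b \<in> hom C (cdom C a) (cdom C k) \<and> ccomp C k b = ccomp C k a" using b ab by simp
  ultimately show "a = b" by (metis (no_types, lifting))
qed

lemma cokernel_hom: "is_cokernel C f c \<Longrightarrow> f \<in> hom C X Y \<Longrightarrow> c \<in> hom C Y (ccod C c)"
  using is_cokernelD(2,3) by (auto simp: hom_def)

lemma cokernel_comp_zer:
  "is_cokernel C f c \<Longrightarrow> f \<in> hom C X Y \<Longrightarrow> ccomp C c f = zer C X (ccod C c)"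
  using is_cokernelD(4) by (auto simp: hom_def)

lemma cokernel_factor:
  assumes c: "is_cokernel C f c" and f: "f \<in> hom C X Y" and h: "h \<in> hom C Y W"
    and hf: "ccomp C h f = zer C X W"
  shows "\<exists>u. u \<in> hom C (ccod C c) W \<and> ccomp C u c = h"
proof -
  have "h \<in> Mor C" "cdom C h = ccod C f" "ccomp C h f = zer C (cdom C f) (ccod C h)"
    "ccod C h = W" using f h hf by (simp_all add: hom_def)
  then show ?thesis using is_cokernelD(5)[OF c] by blast
qed

lemma abelian_structure:
  shows "\<exists>Z. is_zero_obj C Z"
    and "\<forall>X\<in>Ob C. \<forall>Y\<in>Ob C. \<exists>S i1 i2 p1 p2. is_biproduct C X Y S i1 i2 p1 p2"
    and "\<forall>f\<in>Mor C. \<exists>k. is_kernel C f k"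
    and "\<forall>f\<in>Mor C. \<exists>c. is_cokernel C f c"
    and "\<forall>m. is_mono C m \<longrightarrow> (\<exists>f. is_kernel C f m)"
    and "\<forall>e. is_epi C e \<longrightarrow> (\<exists>f. is_cokernel C f e)"
  using abelian unfolding abelian_category_def by argo+

lemma ex_kernel: "f \<in> hom C X Y \<Longrightarrow> \<exists>k. is_kernel C f k"
  using abelian_structure(3) by (auto simp: hom_def)

lemma ex_cokernel: "f \<in> hom C X Y \<Longrightarrow> \<exists>c. is_cokernel C f c"
  using abelian_structure(4) by (auto simp: hom_def)

lemma mono_is_kernel: "is_mono C m \<Longrightarrow> \<exists>f. is_kernel C f m"
  using abelian_structure(5) by blast

lemma epi_is_cokernel: "is_epi C e \<Longrightarrow> \<exists>f. is_cokernel C f e"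
  using abelian_structure(6) by blast

lemma epi_factor:
  assumes ep: "is_epi C e" and e: "e \<in> hom C X Y" and k: "is_kernel C e k"
    and u: "u \<in> hom C X W" and uk: "ccomp C u k = zer C (cdom C k) W"
  shows "\<exists>v. v \<in> hom C Y W \<and> ccomp C v e = u"
proof -
  obtain h where h: "is_cokernel C h e" using epi_is_cokernel[OF ep] by blast
  have hh: "h \<in> hom C (cdom C h) X" using is_cokernelD(1,3)[OF h] e by (auto simp: hom_def)
  have "ccomp C e h = zer C (cdom C h) Y"
    using cokernel_comp_zer[OF h hh] e by (auto simp: hom_def)
  then obtain t where t: "t \<in> hom C (cdom C h) (cdom C k)" "ccomp C k t = h"
    using kernel_factor[OF k e hh] by blast
  have "ccomp C u h = ccomp C (ccomp C u k) t"
    using comp_assoc[OF t(1) kernel_hom[OF k e] u] t(2) by simp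
  also have "\<dots> = zer C (cdom C h) W" using uk comp_zer_left[OF t(1) hom_cod_ob[OF u]] by simp
  finally obtain v where "v \<in> hom C (ccod C e) W" "ccomp C v e = u"
    using cokernel_factor[OF h hh u] by blast
  moreover have "ccod C e = Y" using e by (simp add: hom_def)
  ultimately show ?thesis by metis
qed

text \<open>The image of \<open>f\<close> is the least subobject through which \<open>f\<close> factors.\<close>

lemma image_least:
  assumes c: "is_cokernel C f c" and m: "is_kernel C c m" and f: "f \<in> hom C X Y"
    and r: "is_mono C r" "r \<in> hom C K (cdom C m)"
    and e: "e \<in> hom C X K" and mre: "ccomp C (ccomp C m r) e = f"
  shows "\<exists>v. v \<in> hom C (cdom C m) K \<and> ccomp C r v = cid C (cdom C m)"
proof -
  have ch: "c \<in> hom C Y (ccod C c)" using cokernel_hom[OF c f] .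
  have mh: "m \<in> hom C (cdom C m) Y" using kernel_hom[OF m ch] .
  have mrh: "ccomp C m r \<in> hom C K Y" using comp_hom[OF r(2) mh] .
  obtain s where s: "is_kernel C s (ccomp C m r)"
    using mono_is_kernel[OF mono_comp[OF r kernel_mono[OF m] mh]] by blast
  have sh: "s \<in> hom C Y (ccod C s)" using is_kernelD(1,3)[OF s] mrh by (auto simp: hom_def)
  have "ccomp C s f = ccomp C (ccomp C s (ccomp C m r)) e"
    using mre comp_assoc[OF e mrh sh] by simp
  also have "\<dots> = zer C X (ccod C s)"
    using kernel_comp_zer[OF s sh] mrh comp_zer_left[OF e hom_cod_ob[OF sh]] by (simp add: hom_def)
  finally obtain s' where s': "s' \<in> hom C (ccod C c) (ccod C s)" "ccomp C s' c = s"
    using cokernel_factor[OF c f sh] by blast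
  have "ccomp C s m = ccomp C s' (ccomp C c m)" using s' comp_assoc[OF mh ch s'(1)] by simp
  also have "\<dots> = zer C (cdom C m) (ccod C s)"
    using kernel_comp_zer[OF m ch] comp_zer_right[OF s'(1) hom_dom_ob[OF mh]] by simp
  finally obtain v where v: "v \<in> hom C (cdom C m) K" "ccomp C (ccomp C m r) v = m"
    using kernel_factor[OF s sh mh] mrh by (auto simp: hom_def)
  have "ccomp C m (ccomp C r v) = ccomp C m (cid C (cdom C m))"
    using v comp_assoc[OF v(1) r(2) mh] comp_id_right[OF mh] by simp
  then have "ccomp C r v = cid C (cdom C m)"
    using mono_cancel[OF kernel_mono[OF m] mh comp_hom[OF v(1) r(2)] id_hom[OF hom_dom_ob[OF mh]]]
    by simp
  with v(1) show ?thesis by blast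
qed

lemma image_factorisation:
  assumes c: "is_cokernel C f c" and m: "is_kernel C c m" and f: "f \<in> hom C X Y"
  shows "\<exists>e. e \<in> hom C X (cdom C m) \<and> ccomp C m e = f \<and> is_epi C e"
proof -
  define I where "I = cdom C m"
  have ch: "c \<in> hom C Y (ccod C c)" using cokernel_hom[OF c f] .
  have mh: "m \<in> hom C I Y" using kernel_hom[OF m ch] I_def by simp
  obtain e where e: "e \<in> hom C X I" "ccomp C m e = f"
    using kernel_factor[OF m ch f cokernel_comp_zer[OF c f]] I_def by blast
  have "is_epi C e"
  proof (rule epiI[OF e(1)])
    fix W u assume u: "u \<in> hom C I W" and ue: "ccomp C u e = zer C X W"
    obtain q where q: "is_cokernel C e q" using ex_cokernel[OF e(1)] by blast
    define Q where "Q = ccod C q"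
    have qh: "q \<in> hom C I Q" using cokernel_hom[OF q e(1)] Q_def by simp
    obtain r where r: "is_kernel C q r" using ex_kernel[OF qh] by blast
    define K where "K = cdom C r"
    have rh: "r \<in> hom C K I" using kernel_hom[OF r qh] K_def by simp
    have qe: "ccomp C q e = zer C X Q" using cokernel_comp_zer[OF q e(1)] Q_def by simp
    obtain e1 where e1: "e1 \<in> hom C X K" "ccomp C r e1 = e"
      using kernel_factor[OF r qh e(1) qe] K_def by blast
    have "ccomp C (ccomp C m r) e1 = f" using e e1 comp_assoc[OF e1(1) rh mh] by simp
    then obtain v where v: "v \<in> hom C I K" "ccomp C r v = cid C I"
      using image_least[OF c m f kernel_mono[OF r] rh[unfolded I_def] e1(1)] I_def by blast
    have "q = ccomp C q (ccomp C r v)" using v(2) comp_id_right[OF qh] by simp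
    also have "\<dots> = ccomp C (ccomp C q r) v" using comp_assoc[OF v(1) rh qh] by simp
    also have "\<dots> = zer C I Q"
      using kernel_comp_zer[OF r qh] K_def comp_zer_left[OF v(1) hom_cod_ob[OF qh]] by simp
    finally have "q = zer C I Q" .
    moreover obtain u' where "u' \<in> hom C Q W" "ccomp C u' q = u"
      using cokernel_factor[OF q e(1) u ue] Q_def by blast
    ultimately show "u = zer C I W" using comp_zer_right[OF _ hom_dom_ob[OF u]] by metis
  qed
  with e show ?thesis unfolding I_def by (intro exI conjI)
qed

section \<open>Biproducts and the zero object\<close>

lemma is_biproductD:
  assumes "is_biproduct C X Y S i1 i2 p1 p2"
  shows "S \<in> Ob C" and "i1 \<in> hom C X S" and "i2 \<in> hom C Y S"
    and "p1 \<in> hom C S X" and "p2 \<in> hom C S Y"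
    and "ccomp C p1 i1 = cid C X" and "ccomp C p2 i2 = cid C Y"
    and "ccomp C p2 i1 = zer C X Y" and "ccomp C p1 i2 = zer C Y X"
    and "madd C (ccomp C i1 p1) (ccomp C i2 p2) = cid C S"
  using assms unfolding is_biproduct_def by argo+

lemma ex_biproduct:
  "X \<in> Ob C \<Longrightarrow> Y \<in> Ob C \<Longrightarrow> \<exists>S i1 i2 p1 p2. is_biproduct C X Y S i1 i2 p1 p2"
  using abelian_structure(2) by blast

lemma chosen_biproduct:
  assumes X: "X \<in> Ob C" and Y: "Y \<in> Ob C"
  shows "is_biproduct C X Y (bobj C X Y) (binj1 C X Y) (binj2 C X Y) (bprj1 C X Y) (bprj2 C X Y)"
proof -
  obtain S i1 i2 p1 p2 where "is_biproduct C X Y S i1 i2 p1 p2" using ex_biproduct[OF X Y] by blast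
  then have "\<exists>t. case t of (S, i1, i2, p1, p2) \<Rightarrow> is_biproduct C X Y S i1 i2 p1 p2"
    by (intro exI[of _ "(S, i1, i2, p1, p2)"]) simp
  then have "case bsum_data C X Y of (S, i1, i2, p1, p2) \<Rightarrow> is_biproduct C X Y S i1 i2 p1 p2"
    unfolding bsum_data_def by (rule someI_ex)
  then show ?thesis unfolding bobj_def binj1_def binj2_def bprj1_def bprj2_def
    by (cases "bsum_data C X Y") auto
qed

lemma
  assumes "X \<in> Ob C" "Y \<in> Ob C"
  shows bobj_ob: "bobj C X Y \<in> Ob C"
    and binj1_hom: "binj1 C X Y \<in> hom C X (bobj C X Y)"
    and binj2_hom: "binj2 C X Y \<in> hom C Y (bobj C X Y)"
    and bprj1_hom: "bprj1 C X Y \<in> hom C (bobj C X Y) X"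
    and bprj2_hom: "bprj2 C X Y \<in> hom C (bobj C X Y) Y"
    and bprj1_binj1: "ccomp C (bprj1 C X Y) (binj1 C X Y) = cid C X"
    and bprj2_binj2: "ccomp C (bprj2 C X Y) (binj2 C X Y) = cid C Y"
    and bprj2_binj1: "ccomp C (bprj2 C X Y) (binj1 C X Y) = zer C X Y"
    and bprj1_binj2: "ccomp C (bprj1 C X Y) (binj2 C X Y) = zer C Y X"
    and binj_bprj_sum: "madd C (ccomp C (binj1 C X Y) (bprj1 C X Y))
                           (ccomp C (binj2 C X Y) (bprj2 C X Y)) = cid C (bobj C X Y)"
  using is_biproductD[OF chosen_biproduct[OF assms]] by blast+

lemma col_hom:
  assumes a: "a \<in> hom C T Y1" and b: "b \<in> hom C T Y2"
  shows "col C Y1 Y2 a b \<in> hom C T (bobj C Y1 Y2)"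
  unfolding col_def
  using add_hom[OF comp_hom[OF a binj1_hom] comp_hom[OF b binj2_hom]] hom_cod_ob[OF a] hom_cod_ob[OF b]
  by simp

lemma bprj1_col:
  assumes a: "a \<in> hom C T Y1" and b: "b \<in> hom C T Y2"
  shows "ccomp C (bprj1 C Y1 Y2) (col C Y1 Y2 a b) = a"
proof -
  note Y = hom_cod_ob[OF a] hom_cod_ob[OF b]
  have i1: "ccomp C (binj1 C Y1 Y2) a \<in> hom C T (bobj C Y1 Y2)" using a binj1_hom[OF Y] by blast
  have i2: "ccomp C (binj2 C Y1 Y2) b \<in> hom C T (bobj C Y1 Y2)" using b binj2_hom[OF Y] by blast
  have "ccomp C (bprj1 C Y1 Y2) (col C Y1 Y2 a b)
        = madd C (ccomp C (ccomp C (bprj1 C Y1 Y2) (binj1 C Y1 Y2)) a)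
                 (ccomp C (ccomp C (bprj1 C Y1 Y2) (binj2 C Y1 Y2)) b)"
    unfolding col_def using comp_add_left[OF i1 i2 bprj1_hom[OF Y]]
      comp_assoc[OF a binj1_hom[OF Y] bprj1_hom[OF Y]] comp_assoc[OF b binj2_hom[OF Y] bprj1_hom[OF Y]]
    by simp
  also have "\<dots> = a"
    using bprj1_binj1[OF Y] bprj1_binj2[OF Y] comp_id_left[OF a] comp_zer_left[OF b Y(1)]
      add_zer_right[OF a] by simp
  finally show ?thesis .
qed

lemma bprj2_col:
  assumes a: "a \<in> hom C T Y1" and b: "b \<in> hom C T Y2"
  shows "ccomp C (bprj2 C Y1 Y2) (col C Y1 Y2 a b) = b"
proof -
  note Y = hom_cod_ob[OF a] hom_cod_ob[OF b]
  have i1: "ccomp C (binj1 C Y1 Y2) a \<in> hom C T (bobj C Y1 Y2)" using a binj1_hom[OF Y] by blast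
  have i2: "ccomp C (binj2 C Y1 Y2) b \<in> hom C T (bobj C Y1 Y2)" using b binj2_hom[OF Y] by blast
  have "ccomp C (bprj2 C Y1 Y2) (col C Y1 Y2 a b)
        = madd C (ccomp C (ccomp C (bprj2 C Y1 Y2) (binj1 C Y1 Y2)) a)
                 (ccomp C (ccomp C (bprj2 C Y1 Y2) (binj2 C Y1 Y2)) b)"
    unfolding col_def using comp_add_left[OF i1 i2 bprj2_hom[OF Y]]
      comp_assoc[OF a binj1_hom[OF Y] bprj2_hom[OF Y]] comp_assoc[OF b binj2_hom[OF Y] bprj2_hom[OF Y]]
    by simp
  also have "\<dots> = b"
    using bprj2_binj1[OF Y] bprj2_binj2[OF Y] comp_id_left[OF b] comp_zer_left[OF a Y(2)]
      add_zer_left[OF b] by simp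
  finally show ?thesis .
qed

lemma col_bprj:
  assumes Y: "Y1 \<in> Ob C" "Y2 \<in> Ob C" and z: "z \<in> hom C T (bobj C Y1 Y2)"
  shows "col C Y1 Y2 (ccomp C (bprj1 C Y1 Y2) z) (ccomp C (bprj2 C Y1 Y2) z) = z"
proof -
  have p1: "ccomp C (binj1 C Y1 Y2) (bprj1 C Y1 Y2) \<in> hom C (bobj C Y1 Y2) (bobj C Y1 Y2)"
    using binj1_hom[OF Y] bprj1_hom[OF Y] by blast
  have p2: "ccomp C (binj2 C Y1 Y2) (bprj2 C Y1 Y2) \<in> hom C (bobj C Y1 Y2) (bobj C Y1 Y2)"
    using binj2_hom[OF Y] bprj2_hom[OF Y] by blast
  have "z = ccomp C (cid C (bobj C Y1 Y2)) z" using comp_id_left[OF z] by simp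
  also have "\<dots> = madd C (ccomp C (ccomp C (binj1 C Y1 Y2) (bprj1 C Y1 Y2)) z)
                         (ccomp C (ccomp C (binj2 C Y1 Y2) (bprj2 C Y1 Y2)) z)"
    using binj_bprj_sum[OF Y] comp_add_right[OF z p1 p2] by simp
  also have "\<dots> = col C Y1 Y2 (ccomp C (bprj1 C Y1 Y2) z) (ccomp C (bprj2 C Y1 Y2) z)"
    unfolding col_def
    using comp_assoc[OF z bprj1_hom[OF Y] binj1_hom[OF Y]] comp_assoc[OF z bprj2_hom[OF Y] binj2_hom[OF Y]]
    by simp
  finally show ?thesis by simp
qed

lemma biproduct_ext:
  assumes Y: "Y1 \<in> Ob C" "Y2 \<in> Ob C"
    and z: "z \<in> hom C T (bobj C Y1 Y2)" and z': "z' \<in> hom C T (bobj C Y1 Y2)"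
    and "ccomp C (bprj1 C Y1 Y2) z = ccomp C (bprj1 C Y1 Y2) z'"
    and "ccomp C (bprj2 C Y1 Y2) z = ccomp C (bprj2 C Y1 Y2) z'"
  shows "z = z'"
proof -
  have "z = col C Y1 Y2 (ccomp C (bprj1 C Y1 Y2) z) (ccomp C (bprj2 C Y1 Y2) z)"
    using col_bprj[OF Y z] by simp
  also have "\<dots> = col C Y1 Y2 (ccomp C (bprj1 C Y1 Y2) z') (ccomp C (bprj2 C Y1 Y2) z')"
    using assms(5,6) by (simp only:)
  also have "\<dots> = z'" using col_bprj[OF Y z'] .
  finally show ?thesis .
qed

lemma row_hom:
  assumes a: "a \<in> hom C X1 Y" and b: "b \<in> hom C X2 Y"
  shows "row C X1 X2 a b \<in> hom C (bobj C X1 X2) Y"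
  unfolding row_def
  using add_hom[OF comp_hom[OF bprj1_hom a] comp_hom[OF bprj2_hom b]] hom_dom_ob[OF a] hom_dom_ob[OF b]
  by simp

lemma row_col:
  assumes a: "a \<in> hom C X1 Y" and b: "b \<in> hom C X2 Y"
    and x: "x \<in> hom C T X1" and y: "y \<in> hom C T X2"
  shows "ccomp C (row C X1 X2 a b) (col C X1 X2 x y) = madd C (ccomp C a x) (ccomp C b y)"
proof -
  note X = hom_dom_ob[OF a] hom_dom_ob[OF b]
  have c: "col C X1 X2 x y \<in> hom C T (bobj C X1 X2)" using col_hom[OF x y] .
  have "ccomp C (row C X1 X2 a b) (col C X1 X2 x y)
        = madd C (ccomp C a (ccomp C (bprj1 C X1 X2) (col C X1 X2 x y)))
                 (ccomp C b (ccomp C (bprj2 C X1 X2) (col C X1 X2 x y)))"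
    unfolding row_def
    using comp_add_right[OF c comp_hom[OF bprj1_hom[OF X] a] comp_hom[OF bprj2_hom[OF X] b]]
      comp_assoc[OF c bprj1_hom[OF X] a] comp_assoc[OF c bprj2_hom[OF X] b] by simp
  then show ?thesis using bprj1_col[OF x y] bprj2_col[OF x y] by simp
qed

lemma row_comp:
  assumes a: "a \<in> hom C X1 Y" and b: "b \<in> hom C X2 Y" and z: "z \<in> hom C T (bobj C X1 X2)"
  shows "ccomp C (row C X1 X2 a b) z
           = madd C (ccomp C a (ccomp C (bprj1 C X1 X2) z)) (ccomp C b (ccomp C (bprj2 C X1 X2) z))"
proof -
  note X = hom_dom_ob[OF a] hom_dom_ob[OF b]
  show ?thesis
    using row_col[OF a b comp_hom[OF z bprj1_hom[OF X]] comp_hom[OF z bprj2_hom[OF X]]]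
      col_bprj[OF X z] by simp
qed

lemma mat_hom:
  assumes a: "a \<in> hom C X1 Y1" and b: "b \<in> hom C X2 Y1"
    and c: "c \<in> hom C X1 Y2" and d: "d \<in> hom C X2 Y2"
  shows "mat C X1 X2 Y1 Y2 a b c d \<in> hom C (bobj C X1 X2) (bobj C Y1 Y2)"
  unfolding mat_def
  using add_hom[OF comp_hom[OF bprj1_hom col_hom[OF a c]] comp_hom[OF bprj2_hom col_hom[OF b d]]]
    hom_dom_ob[OF a] hom_dom_ob[OF b] by simp

lemma bprj_mat:
  assumes a: "a \<in> hom C X1 Y1" and b: "b \<in> hom C X2 Y1"
    and c: "c \<in> hom C X1 Y2" and d: "d \<in> hom C X2 Y2"
  shows "ccomp C (bprj1 C Y1 Y2) (mat C X1 X2 Y1 Y2 a b c d) = row C X1 X2 a b"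
    and "ccomp C (bprj2 C Y1 Y2) (mat C X1 X2 Y1 Y2 a b c d) = row C X1 X2 c d"
proof -
  note X = hom_dom_ob[OF a] hom_dom_ob[OF b] and Y = hom_cod_ob[OF a] hom_cod_ob[OF c]
  have m1: "ccomp C (col C Y1 Y2 a c) (bprj1 C X1 X2) \<in> hom C (bobj C X1 X2) (bobj C Y1 Y2)"
    using col_hom[OF a c] bprj1_hom[OF X] by blast
  have m2: "ccomp C (col C Y1 Y2 b d) (bprj2 C X1 X2) \<in> hom C (bobj C X1 X2) (bobj C Y1 Y2)"
    using col_hom[OF b d] bprj2_hom[OF X] by blast
  show "ccomp C (bprj1 C Y1 Y2) (mat C X1 X2 Y1 Y2 a b c d) = row C X1 X2 a b"
    unfolding mat_def row_def
    using comp_add_left[OF m1 m2 bprj1_hom[OF Y]]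
      comp_assoc[OF bprj1_hom[OF X] col_hom[OF a c] bprj1_hom[OF Y], symmetric]
      comp_assoc[OF bprj2_hom[OF X] col_hom[OF b d] bprj1_hom[OF Y], symmetric]
      bprj1_col[OF a c] bprj1_col[OF b d] by simp
  show "ccomp C (bprj2 C Y1 Y2) (mat C X1 X2 Y1 Y2 a b c d) = row C X1 X2 c d"
    unfolding mat_def row_def
    using comp_add_left[OF m1 m2 bprj2_hom[OF Y]]
      comp_assoc[OF bprj1_hom[OF X] col_hom[OF a c] bprj2_hom[OF Y], symmetric]
      comp_assoc[OF bprj2_hom[OF X] col_hom[OF b d] bprj2_hom[OF Y], symmetric]
      bprj2_col[OF a c] bprj2_col[OF b d] by simp
qed

lemma zobj_is_zero: "is_zero_obj C (zobj C)"
  unfolding zobj_def using abelian_structure(1) by (rule someI_ex)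

lemma zobj_ob: "zobj C \<in> Ob C"
  using zobj_is_zero unfolding is_zero_obj_def by blast

lemma hom_to_zobj:
  assumes x: "x \<in> hom C T (zobj C)"
  shows "x = zer C T (zobj C)"
proof -
  have "\<exists>!u. u \<in> hom C T (zobj C)"
    using zobj_is_zero hom_dom_ob[OF x] unfolding is_zero_obj_def by blast
  then show ?thesis using x zer_hom[OF hom_dom_ob[OF x] zobj_ob] by (metis (no_types))
qed

section \<open>Chasing generalised elements\<close>

definition lifts_locally :: "'m \<Rightarrow> 'm \<Rightarrow> bool" where
  "lifts_locally f y \<longleftrightarrow>
     (\<exists>T e x. e \<in> hom C T (cdom C y) \<and> is_epi C e \<and> x \<in> hom C T (cdom C f) \<and>
              ccomp C f x = ccomp C y e)"

lemma lifts_locallyI: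
  assumes "e \<in> hom C T' T" "is_epi C e" "x \<in> hom C T' X" "f \<in> hom C X Y" "y \<in> hom C T Y"
    and "ccomp C f x = ccomp C y e"
  shows "lifts_locally f y"
  unfolding lifts_locally_def
  by (rule exI[of _ T'], rule exI[of _ e], rule exI[of _ x]) (use assms in \<open>simp add: hom_def\<close>)

lemma lifts_locallyE:
  assumes "lifts_locally f y" "f \<in> hom C X Y" "y \<in> hom C T Y"
  obtains T' e x where "e \<in> hom C T' T" "is_epi C e" "x \<in> hom C T' X" "ccomp C f x = ccomp C y e"
proof -
  have "cdom C y = T" "cdom C f = X" using assms(2,3) by (simp_all add: hom_def)
  then show ?thesis using assms(1) that unfolding lifts_locally_def by blast
qed

lemma lifts_locally_zer:
  assumes f: "f \<in> hom C X Y" and T: "T \<in> Ob C"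
  shows "lifts_locally f (zer C T Y)"
  by (rule lifts_locallyI[OF id_hom[OF T] id_epi[OF T] zer_hom[OF T hom_dom_ob[OF f]] f
        zer_hom[OF T hom_cod_ob[OF f]]])
     (simp add: comp_zer_right[OF f T] comp_id_right[OF zer_hom[OF T hom_cod_ob[OF f]]])

lemma lifts_locally_trans:
  assumes g: "g \<in> hom C X Y" and f: "f \<in> hom C W Y" and z: "z \<in> hom C T Y"
    and zg: "lifts_locally g z"
    and gf: "\<And>T b. b \<in> hom C T X \<Longrightarrow> lifts_locally f (ccomp C g b)"
  shows "lifts_locally f z"
proof -
  obtain T1 e1 b where e1: "e1 \<in> hom C T1 T" "is_epi C e1" and b: "b \<in> hom C T1 X"
    and gb: "ccomp C g b = ccomp C z e1"
    using lifts_locallyE[OF zg g z] by blast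
  obtain T2 e2 a where e2: "e2 \<in> hom C T2 T1" "is_epi C e2" and a: "a \<in> hom C T2 W"
    and fa: "ccomp C f a = ccomp C (ccomp C g b) e2"
    using lifts_locallyE[OF gf[OF b] f comp_hom[OF b g]] by blast
  have "ccomp C f a = ccomp C z (ccomp C e1 e2)"
    using fa gb comp_assoc[OF e2(1) e1(1) z] by simp
  then show ?thesis
    using lifts_locallyI[OF comp_hom[OF e2(1) e1(1)] epi_comp[OF e2 e1] a f z] by blast
qed

lemma lifts_locally_cancel_epi:
  assumes e: "e \<in> hom C T' T" "is_epi C e" and f: "f \<in> hom C X Y" and y: "y \<in> hom C T Y"
    and ye: "lifts_locally f (ccomp C y e)"
  shows "lifts_locally f y"
proof -
  obtain T2 e2 x where e2: "e2 \<in> hom C T2 T'" "is_epi C e2" and x: "x \<in> hom C T2 X"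
    and fx: "ccomp C f x = ccomp C (ccomp C y e) e2"
    using lifts_locallyE[OF ye f comp_hom[OF e(1) y]] by blast
  have "ccomp C f x = ccomp C y (ccomp C e e2)" using fx comp_assoc[OF e2(1) e(1) y] by simp
  then show ?thesis using lifts_locallyI[OF comp_hom[OF e2(1) e(1)] epi_comp[OF e2 e] x f y] by blast
qed

text \<open>With \<open>\<phi> i\<^sub>2\<close> epi, the kernel of \<open>\<phi> : T \<oplus> X \<rightarrow> Y\<close> is a pullback, and pullbacks of
  epimorphisms are epimorphisms.\<close>

lemma kernel_bprj1_epi:
  assumes bp: "is_biproduct C T X S i1 i2 p1 p2" and ph: "\<phi> \<in> hom C S Y"
    and epi: "is_epi C (ccomp C \<phi> i2)" and k: "is_kernel C \<phi> k"
  shows "is_epi C (ccomp C p1 k)"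
proof -
  note b = is_biproductD[OF bp]
  have X: "X \<in> Ob C" using hom_dom_ob[OF b(3)] .
  have phi_zero: "v = zer C Y W"
    if v: "v \<in> hom C Y W" and vi: "ccomp C (ccomp C v \<phi>) i2 = zer C X W" for W v
    using epi_eq_zer[OF comp_hom[OF b(3) ph] epi v] vi comp_assoc[OF b(3) ph v] by simp
  have phepi: "is_epi C \<phi>"
  proof (rule epiI[OF ph])
    fix W u assume u: "u \<in> hom C Y W" and "ccomp C u \<phi> = zer C S W"
    then show "u = zer C Y W" using phi_zero[OF u] comp_zer_left[OF b(3) hom_cod_ob[OF u]] by simp
  qed
  have kh: "k \<in> hom C (cdom C k) S" using kernel_hom[OF k ph] .
  show ?thesis
  proof (rule epiI[OF comp_hom[OF kh b(4)]])
    fix W u assume u: "u \<in> hom C T W" and "ccomp C u (ccomp C p1 k) = zer C (cdom C k) W"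
    then have "ccomp C (ccomp C u p1) k = zer C (cdom C k) W" using comp_assoc[OF kh b(4) u] by simp
    then obtain v where v: "v \<in> hom C Y W" "ccomp C v \<phi> = ccomp C u p1"
      using epi_factor[OF phepi ph k comp_hom[OF b(4) u]] by blast
    have "ccomp C (ccomp C v \<phi>) i2 = ccomp C u (ccomp C p1 i2)"
      using v comp_assoc[OF b(3) b(4) u] by simp
    also have "\<dots> = zer C X W" using b(9) comp_zer_right[OF u X] by simp
    finally have "ccomp C u p1 = zer C S W"
      using phi_zero[OF v(1)] v(2) comp_zer_left[OF ph hom_cod_ob[OF u]] by simp
    then have "ccomp C (ccomp C u p1) i1 = zer C T W"
      using comp_zer_left[OF b(2) hom_cod_ob[OF u]] by simp
    then show "u = zer C T W" using comp_assoc[OF b(2) b(4) u] b(6) comp_id_right[OF u] by simp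
  qed
qed

lemma lifts_locally_epi:
  assumes ep: "is_epi C e" and e: "e \<in> hom C X Y" and y: "y \<in> hom C T Y"
  shows "lifts_locally e y"
proof -
  have T: "T \<in> Ob C" and X: "X \<in> Ob C" using hom_dom_ob[OF y] hom_dom_ob[OF e] .
  obtain S i1 i2 p1 p2 where bp: "is_biproduct C T X S i1 i2 p1 p2" using ex_biproduct[OF T X] by blast
  note b = is_biproductD[OF bp]
  define \<phi> where "\<phi> = madd C (ccomp C y p1) (mneg C (ccomp C e p2))"
  have yp1: "ccomp C y p1 \<in> hom C S Y" using comp_hom[OF b(4) y] .
  have ep2: "ccomp C e p2 \<in> hom C S Y" using comp_hom[OF b(5) e] .
  have ph: "\<phi> \<in> hom C S Y" unfolding \<phi>_def using add_hom[OF yp1 neg_hom[OF ep2]] .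
  have "ccomp C \<phi> i2 = madd C (ccomp C y (ccomp C p1 i2)) (mneg C (ccomp C e (ccomp C p2 i2)))"
    unfolding \<phi>_def using comp_add_right[OF b(3) yp1 neg_hom[OF ep2]] comp_neg_left[OF b(3) ep2]
      comp_assoc[OF b(3) b(4) y] comp_assoc[OF b(3) b(5) e] by simp
  also have "\<dots> = mneg C e"
    using b(7,9) comp_zer_right[OF y X] comp_id_right[OF e] add_zer_left[OF neg_hom[OF e]] by simp
  finally have epi: "is_epi C (ccomp C \<phi> i2)" using epi_neg[OF e ep] by simp
  obtain k where k: "is_kernel C \<phi> k" using ex_kernel[OF ph] by blast
  define K where "K = cdom C k"
  have kh: "k \<in> hom C K S" using kernel_hom[OF k ph] K_def by simp
  have "madd C (ccomp C y (ccomp C p1 k)) (mneg C (ccomp C e (ccomp C p2 k))) = ccomp C \<phi> k"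
    unfolding \<phi>_def using comp_add_right[OF kh yp1 neg_hom[OF ep2]] comp_neg_left[OF kh ep2]
      comp_assoc[OF kh b(4) y] comp_assoc[OF kh b(5) e] by simp
  also have "\<dots> = zer C K Y" using kernel_comp_zer[OF k ph] K_def by simp
  finally have "ccomp C y (ccomp C p1 k) = ccomp C e (ccomp C p2 k)"
    using eq_of_add_neg_eq_zer[OF comp_hom[OF comp_hom[OF kh b(4)] y] comp_hom[OF comp_hom[OF kh b(5)] e]]
    by blast
  then show ?thesis
    using lifts_locallyI[OF comp_hom[OF kh b(4)] kernel_bprj1_epi[OF bp ph epi k] comp_hom[OF kh b(5)] e y]
    by simp
qed

lemma epi_if_lifts_locally:
  assumes e: "e \<in> hom C X Y" and lift: "lifts_locally e (cid C Y)"
  shows "is_epi C e"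
proof (rule epiI[OF e])
  have Y: "Y \<in> Ob C" using hom_cod_ob[OF e] .
  fix W u assume u: "u \<in> hom C Y W" and ue: "ccomp C u e = zer C X W"
  obtain T' e' x where e': "e' \<in> hom C T' Y" "is_epi C e'" and x: "x \<in> hom C T' X"
    and ex: "ccomp C e x = ccomp C (cid C Y) e'"
    using lifts_locallyE[OF lift e id_hom[OF Y]] by blast
  have "ccomp C u e' = ccomp C (ccomp C u e) x" using ex comp_id_left[OF e'(1)] comp_assoc[OF x e u] by simp
  also have "\<dots> = zer C T' W" using ue comp_zer_left[OF x hom_cod_ob[OF u]] by simp
  finally show "u = zer C Y W" using epi_eq_zer[OF e' u] by blast
qed

lemma epi_iff_lifts_locally:
  assumes e: "e \<in> hom C X Y"
  shows "is_epi C e \<longleftrightarrow> (\<forall>T y. y \<in> hom C T Y \<longrightarrow> lifts_locally e y)"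
  using lifts_locally_epi[OF _ e] epi_if_lifts_locally[OF e] id_hom[OF hom_cod_ob[OF e]] by blast

lemma exactD:
  assumes "exact C f g"
  shows "\<forall>c m k. is_cokernel C f c \<and> is_kernel C c m \<and> is_kernel C g k \<longrightarrow>
           (\<exists>u v. u \<in> hom C (cdom C k) (cdom C m) \<and> v \<in> hom C (cdom C m) (cdom C k) \<and>
                  ccomp C m u = k \<and> ccomp C k v = m)"
  using assms unfolding exact_def by argo

lemma lifts_locally_exact:
  assumes ex: "exact C f g" and f: "f \<in> hom C X Y" and g: "g \<in> hom C Y Z"
    and y: "y \<in> hom C T Y" and gy: "ccomp C g y = zer C T Z"
  shows "lifts_locally f y"
proof -
  obtain c where c: "is_cokernel C f c" using ex_cokernel[OF f] by blast
  have ch: "c \<in> hom C Y (ccod C c)" using cokernel_hom[OF c f] .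
  obtain m where m: "is_kernel C c m" using ex_kernel[OF ch] by blast
  obtain k where k: "is_kernel C g k" using ex_kernel[OF g] by blast
  obtain u where u: "u \<in> hom C (cdom C k) (cdom C m)" "ccomp C m u = k"
    using exactD[OF ex, rule_format, OF conjI[OF c conjI[OF m k]]] by blast
  obtain e0 where e0: "e0 \<in> hom C X (cdom C m)" "ccomp C m e0 = f" "is_epi C e0"
    using image_factorisation[OF c m f] by blast
  obtain t where t: "t \<in> hom C T (cdom C k)" "ccomp C k t = y" using kernel_factor[OF k g y gy] by blast
  have mh: "m \<in> hom C (cdom C m) Y" using kernel_hom[OF m ch] .
  have ut: "ccomp C u t \<in> hom C T (cdom C m)" using comp_hom[OF t(1) u(1)] .
  obtain T' e x where e: "e \<in> hom C T' T" "is_epi C e" and x: "x \<in> hom C T' X"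
    and e0x: "ccomp C e0 x = ccomp C (ccomp C u t) e"
    using lifts_locallyE[OF lifts_locally_epi[OF e0(3) e0(1) ut] e0(1) ut] by blast
  have "ccomp C f x = ccomp C m (ccomp C e0 x)" using e0(2) comp_assoc[OF x e0(1) mh] by simp
  also have "\<dots> = ccomp C (ccomp C m (ccomp C u t)) e" using e0x comp_assoc[OF e(1) ut mh] by simp
  also have "ccomp C m (ccomp C u t) = y" using comp_assoc[OF t(1) u(1) mh] u(2) t(2) by simp
  finally show ?thesis using lifts_locallyI[OF e x f y] by blast
qed

lemma exact_comp_zer:
  assumes ex: "exact C f g" and f: "f \<in> hom C X Y" and g: "g \<in> hom C Y Z"
  shows "ccomp C g f = zer C X Z"
proof -
  obtain c where c: "is_cokernel C f c" using ex_cokernel[OF f] by blast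
  have ch: "c \<in> hom C Y (ccod C c)" using cokernel_hom[OF c f] .
  obtain m where m: "is_kernel C c m" using ex_kernel[OF ch] by blast
  obtain k where k: "is_kernel C g k" using ex_kernel[OF g] by blast
  obtain v where v: "v \<in> hom C (cdom C m) (cdom C k)" "ccomp C k v = m"
    using exactD[OF ex, rule_format, OF conjI[OF c conjI[OF m k]]] by blast
  obtain e0 where e0: "e0 \<in> hom C X (cdom C m)" "ccomp C m e0 = f"
    using image_factorisation[OF c m f] by blast
  have mh: "m \<in> hom C (cdom C m) Y" using kernel_hom[OF m ch] .
  have kh: "k \<in> hom C (cdom C k) Y" using kernel_hom[OF k g] .
  have "ccomp C g f = ccomp C (ccomp C (ccomp C g k) v) e0"
    using e0(2) v(2) comp_assoc[OF e0(1) mh g] comp_assoc[OF v(1) kh g] by simp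
  also have "\<dots> = zer C X Z"
    using kernel_comp_zer[OF k g] comp_zer_left[OF v(1) hom_cod_ob[OF g]]
      comp_zer_left[OF e0(1) hom_cod_ob[OF g]] by simp
  finally show ?thesis .
qed

lemma exactI:
  assumes f: "f \<in> hom C X Y" and g: "g \<in> hom C Y Z" and gf: "ccomp C g f = zer C X Z"
    and lift: "\<And>T y. y \<in> hom C T Y \<Longrightarrow> ccomp C g y = zer C T Z \<Longrightarrow> lifts_locally f y"
  shows "exact C f g"
  unfolding exact_def
proof (intro conjI allI impI)
  show "f \<in> Mor C" "g \<in> Mor C" "ccod C f = cdom C g" using f g by (auto simp: hom_def)
  fix c m k assume "is_cokernel C f c \<and> is_kernel C c m \<and> is_kernel C g k"
  then have c: "is_cokernel C f c" and m: "is_kernel C c m" and k: "is_kernel C g k" by auto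
  obtain e0 where e0: "e0 \<in> hom C X (cdom C m)" "ccomp C m e0 = f" "is_epi C e0"
    using image_factorisation[OF c m f] by blast
  have ch: "c \<in> hom C Y (ccod C c)" using cokernel_hom[OF c f] .
  have mh: "m \<in> hom C (cdom C m) Y" using kernel_hom[OF m ch] .
  have kh: "k \<in> hom C (cdom C k) Y" using kernel_hom[OF k g] .
  have "ccomp C (ccomp C g m) e0 = zer C X Z" using comp_assoc[OF e0(1) mh g] e0(2) gf by simp
  then have "ccomp C g m = zer C (cdom C m) Z" using epi_eq_zer[OF e0(1) e0(3) comp_hom[OF mh g]] by blast
  then obtain v where v: "v \<in> hom C (cdom C m) (cdom C k)" "ccomp C k v = m"
    using kernel_factor[OF k g mh] by blast
  obtain T' e x where e: "e \<in> hom C T' (cdom C k)" "is_epi C e" and x: "x \<in> hom C T' X"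
    and fx: "ccomp C f x = ccomp C k e"
    using lifts_locallyE[OF lift[OF kh kernel_comp_zer[OF k g]] f kh] by blast
  have "ccomp C (ccomp C c k) e = ccomp C (ccomp C c f) x"
    using comp_assoc[OF e(1) kh ch] fx comp_assoc[OF x f ch] by simp
  also have "\<dots> = zer C T' (ccod C c)"
    using cokernel_comp_zer[OF c f] comp_zer_left[OF x hom_cod_ob[OF ch]] by simp
  finally have "ccomp C c k = zer C (cdom C k) (ccod C c)"
    using epi_eq_zer[OF e comp_hom[OF kh ch]] by blast
  then obtain u where u: "u \<in> hom C (cdom C k) (cdom C m)" "ccomp C m u = k"
    using kernel_factor[OF m ch kh] by blast
  show "\<exists>u v. u \<in> hom C (cdom C k) (cdom C m) \<and> v \<in> hom C (cdom C m) (cdom C k) \<and>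
               ccomp C m u = k \<and> ccomp C k v = m"
    using u v by (intro exI conjI)
qed

lemma lifts_locally_rowI:
  assumes e: "e \<in> hom C T' T" "is_epi C e"
    and a: "a \<in> hom C X1 Y" and b: "b \<in> hom C X2 Y" and z: "z \<in> hom C T Y"
    and u: "u \<in> hom C T' X1" and v: "v \<in> hom C T' X2"
    and ze: "ccomp C z e = madd C (ccomp C a u) (ccomp C b v)"
  shows "lifts_locally (row C X1 X2 a b) z"
  using lifts_locallyI[OF e col_hom[OF u v] row_hom[OF a b] z] row_col[OF a b u v] ze by simp

lemma lifts_locally_rowE:
  assumes lift: "lifts_locally (row C X1 X2 a b) z"
    and a: "a \<in> hom C X1 Y" and b: "b \<in> hom C X2 Y" and z: "z \<in> hom C T Y"
  obtains T' e u v where "e \<in> hom C T' T" "is_epi C e" "u \<in> hom C T' X1" "v \<in> hom C T' X2"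
    "ccomp C z e = madd C (ccomp C a u) (ccomp C b v)"
proof -
  note X = hom_dom_ob[OF a] hom_dom_ob[OF b]
  obtain T' e w where e: "e \<in> hom C T' T" "is_epi C e" and w: "w \<in> hom C T' (bobj C X1 X2)"
    and rw: "ccomp C (row C X1 X2 a b) w = ccomp C z e"
    using lifts_locallyE[OF lift row_hom[OF a b] z] by blast
  show ?thesis
    by (rule that[OF e comp_hom[OF w bprj1_hom[OF X]] comp_hom[OF w bprj2_hom[OF X]]])
       (use rw row_comp[OF a b w] in simp)
qed

end

section \<open>Mapping cones\<close>

locale mapping_cone = abelian C for C :: "('o, 'm) cat" +
  fixes n :: nat and X Y :: "nat \<Rightarrow> 'o" and dX dY h :: "nat \<Rightarrow> 'm"
  assumes length_pos: "1 \<le> n"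
    and X_ob: "j \<le> n \<Longrightarrow> X j \<in> Ob C"
    and Y_ob: "j \<le> n \<Longrightarrow> Y j \<in> Ob C"
    and h_hom: "j \<le> n \<Longrightarrow> h j \<in> hom C (X j) (Y j)"
    and dX_hom: "j < n \<Longrightarrow> dX j \<in> hom C (X j) (X (Suc j))"
    and dY_hom: "j < n \<Longrightarrow> dY j \<in> hom C (Y j) (Y (Suc j))"
begin

abbreviation d :: "nat \<Rightarrow> 'm" where
  "d \<equiv> cone_d C n X Y dX dY h"

definition cone_term :: "nat \<Rightarrow> 'o" where
  "cone_term j = (if j = 0 then X 0 else if j \<le> n then bobj C (X j) (Y (j - 1)) else Y n)"

definition X_part :: "nat \<Rightarrow> 'm \<Rightarrow> 'm" where
  "X_part j z = (if j = 0 then z else ccomp C (bprj1 C (X j) (Y (j - 1))) z)"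

lemma d_0_hom: "d 0 \<in> hom C (X 0) (bobj C (X 1) (Y 0))"
  unfolding cone_d_def using col_hom[OF neg_hom[OF dX_hom] h_hom] length_pos by simp

lemma d_hom:
  assumes "0 < j" "j < n"
  shows "d j \<in> hom C (bobj C (X j) (Y (j - 1))) (bobj C (X (Suc j)) (Y j))"
proof -
  have dY: "dY (j - 1) \<in> hom C (Y (j - 1)) (Y j)" using dY_hom[of "j - 1"] assms by simp
  have "zer C (Y (j - 1)) (X (Suc j)) \<in> hom C (Y (j - 1)) (X (Suc j))"
    using zer_hom[OF hom_dom_ob[OF dY] X_ob[of "Suc j"]] assms by simp
  then show ?thesis
    unfolding cone_d_def using mat_hom[OF neg_hom[OF dX_hom] _ h_hom dY] assms by simp
qed

lemma d_n_hom: "d n \<in> hom C (bobj C (X n) (Y (n - 1))) (Y n)"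
  unfolding cone_d_def using row_hom[OF h_hom dY_hom[of "n - 1"]] length_pos by simp

lemma d_0_components:
  assumes x: "x \<in> hom C T (X 0)"
  shows "ccomp C (bprj1 C (X 1) (Y 0)) (ccomp C (d 0) x) = mneg C (ccomp C (dX 0) x)"
    and "ccomp C (bprj2 C (X 1) (Y 0)) (ccomp C (d 0) x) = ccomp C (h 0) x"
proof -
  have dX: "dX 0 \<in> hom C (X 0) (X 1)" using dX_hom[of 0] length_pos by simp
  note Ob = hom_cod_ob[OF dX] Y_ob[of 0]
  have d0: "d 0 = col C (X 1) (Y 0) (mneg C (dX 0)) (h 0)" by (simp add: cone_d_def)
  show "ccomp C (bprj1 C (X 1) (Y 0)) (ccomp C (d 0) x) = mneg C (ccomp C (dX 0) x)"
    using comp_assoc[OF x d_0_hom bprj1_hom[OF Ob], symmetric] bprj1_col[OF neg_hom[OF dX] h_hom]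
      comp_neg_left[OF x dX] d0 by simp
  show "ccomp C (bprj2 C (X 1) (Y 0)) (ccomp C (d 0) x) = ccomp C (h 0) x"
    using comp_assoc[OF x d_0_hom bprj2_hom[OF Ob], symmetric] bprj2_col[OF neg_hom[OF dX] h_hom]
      d0 by simp
qed

lemma d_components:
  assumes j: "0 < j" "j < n" and z: "z \<in> hom C T (bobj C (X j) (Y (j - 1)))"
  shows "ccomp C (bprj1 C (X (Suc j)) (Y j)) (ccomp C (d j) z)
           = mneg C (ccomp C (dX j) (ccomp C (bprj1 C (X j) (Y (j - 1))) z))"
    and "ccomp C (bprj2 C (X (Suc j)) (Y j)) (ccomp C (d j) z)
           = madd C (ccomp C (h j) (ccomp C (bprj1 C (X j) (Y (j - 1))) z))
                    (ccomp C (dY (j - 1)) (ccomp C (bprj2 C (X j) (Y (j - 1))) z))"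
proof -
  have dX: "dX j \<in> hom C (X j) (X (Suc j))" using dX_hom j by simp
  have hj: "h j \<in> hom C (X j) (Y j)" using h_hom j by simp
  have dY: "dY (j - 1) \<in> hom C (Y (j - 1)) (Y j)" using dY_hom[of "j - 1"] j by simp
  have zr: "zer C (Y (j - 1)) (X (Suc j)) \<in> hom C (Y (j - 1)) (X (Suc j))"
    using hom_dom_ob[OF dY] hom_cod_ob[OF dX] by blast
  note mat = mat_hom[OF neg_hom[OF dX] zr hj dY] and Ob = hom_cod_ob[OF dX] hom_cod_ob[OF hj]
  have dj: "d j = mat C (X j) (Y (j - 1)) (X (Suc j)) (Y j)
                    (mneg C (dX j)) (zer C (Y (j - 1)) (X (Suc j))) (h j) (dY (j - 1))"
    using j by (simp add: cone_d_def)
  have z1: "ccomp C (bprj1 C (X j) (Y (j - 1))) z \<in> hom C T (X j)"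
    using comp_hom[OF z bprj1_hom[OF hom_dom_ob[OF dX] hom_dom_ob[OF dY]]] .
  have z2: "ccomp C (bprj2 C (X j) (Y (j - 1))) z \<in> hom C T (Y (j - 1))"
    using comp_hom[OF z bprj2_hom[OF hom_dom_ob[OF dX] hom_dom_ob[OF dY]]] .
  show "ccomp C (bprj1 C (X (Suc j)) (Y j)) (ccomp C (d j) z)
          = mneg C (ccomp C (dX j) (ccomp C (bprj1 C (X j) (Y (j - 1))) z))"
    using comp_assoc[OF z mat bprj1_hom[OF Ob], symmetric] bprj_mat(1)[OF neg_hom[OF dX] zr hj dY]
      row_comp[OF neg_hom[OF dX] zr z] comp_neg_left[OF z1 dX] comp_zer_left[OF z2 Ob(1)]
      add_zer_right[OF neg_hom[OF comp_hom[OF z1 dX]]] dj by simp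
  show "ccomp C (bprj2 C (X (Suc j)) (Y j)) (ccomp C (d j) z)
          = madd C (ccomp C (h j) (ccomp C (bprj1 C (X j) (Y (j - 1))) z))
                   (ccomp C (dY (j - 1)) (ccomp C (bprj2 C (X j) (Y (j - 1))) z))"
    using comp_assoc[OF z mat bprj2_hom[OF Ob], symmetric] bprj_mat(2)[OF neg_hom[OF dX] zr hj dY]
      row_comp[OF hj dY z] dj by simp
qed

lemma d_n_comp:
  assumes z: "z \<in> hom C T (bobj C (X n) (Y (n - 1)))"
  shows "ccomp C (d n) z
           = madd C (ccomp C (h n) (ccomp C (bprj1 C (X n) (Y (n - 1))) z))
                    (ccomp C (dY (n - 1)) (ccomp C (bprj2 C (X n) (Y (n - 1))) z))"
proof -
  have "dY (n - 1) \<in> hom C (Y (n - 1)) (Y n)" using dY_hom[of "n - 1"] length_pos by simp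
  then show ?thesis using row_comp[OF h_hom _ z] length_pos by (simp add: cone_d_def)
qed

lemma d_in_hom:
  assumes j: "j \<le> n"
  shows "d j \<in> hom C (cone_term j) (cone_term (Suc j))"
proof -
  consider "j = 0" | "0 < j" "j < n" | "0 < j" "j = n" using j length_pos by linarith
  then show ?thesis
  proof cases
    case 1
    then show ?thesis using d_0_hom length_pos unfolding cone_term_def by simp
  next
    case 2
    then show ?thesis using d_hom[OF 2] unfolding cone_term_def by simp
  next
    case 3
    then show ?thesis using d_n_hom unfolding cone_term_def by simp
  qed
qed

lemma cone_term_Suc: "j < n \<Longrightarrow> cone_term (Suc j) = bobj C (X (Suc j)) (Y j)"
  unfolding cone_term_def by simp

lemma X_part_hom:
  assumes j: "j \<le> n" and z: "z \<in> hom C T (cone_term j)"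
  shows "X_part j z \<in> hom C T (X j)"
proof (cases "j = 0")
  case True
  then show ?thesis using z unfolding X_part_def cone_term_def by simp
next
  case False
  then have "z \<in> hom C T (bobj C (X j) (Y (j - 1)))" using z j unfolding cone_term_def by simp
  then show ?thesis using comp_hom[OF _ bprj1_hom[OF X_ob[OF j] Y_ob]] False j
    unfolding X_part_def by simp
qed

lemma bprj1_d:
  assumes j: "j < n" and z: "z \<in> hom C T (cone_term j)"
  shows "ccomp C (bprj1 C (X (Suc j)) (Y j)) (ccomp C (d j) z) = mneg C (ccomp C (dX j) (X_part j z))"
proof (cases "j = 0")
  case True
  then show ?thesis using d_0_components(1)[of z] z unfolding X_part_def cone_term_def by simp
next
  case False
  then show ?thesis using d_components(1)[of j z] z j unfolding X_part_def cone_term_def by simp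
qed

lemma d_0_mono_eq_zer:
  assumes mono: "is_mono C (d 0)" and x: "x \<in> hom C T (X 0)"
    and dx: "ccomp C (dX 0) x = zer C T (X 1)" and hx: "ccomp C (h 0) x = zer C T (Y 0)"
  shows "x = zer C T (X 0)"
proof (rule mono_eq_zer[OF mono d_0_hom x])
  have X1: "X 1 \<in> Ob C" using X_ob[OF length_pos] .
  have Y0: "Y 0 \<in> Ob C" using Y_ob by simp
  have T: "T \<in> Ob C" using hom_dom_ob[OF x] .
  have "ccomp C (bprj1 C (X 1) (Y 0)) (ccomp C (d 0) x) = zer C T (X 1)"
    using d_0_components(1)[OF x] dx neg_zer[OF T X1] by simp
  moreover have "ccomp C (bprj2 C (X 1) (Y 0)) (ccomp C (d 0) x) = zer C T (Y 0)"
    using d_0_components(2)[OF x] hx by simp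
  ultimately show "ccomp C (d 0) x = zer C T (bobj C (X 1) (Y 0))"
    using biproduct_ext[OF X1 Y0 comp_hom[OF x d_0_hom] zer_hom[OF T bobj_ob[OF X1 Y0]]]
      comp_zer_right[OF bprj1_hom[OF X1 Y0] T] comp_zer_right[OF bprj2_hom[OF X1 Y0] T] by simp
qed

lemma d_col_eq_zer:
  assumes j: "0 < j" "j \<le> n" and x: "x \<in> hom C T (X j)" and w: "w \<in> hom C T (Y (j - 1))"
    and dx: "j < n \<Longrightarrow> ccomp C (dX j) x = zer C T (X (Suc j))"
    and hx: "madd C (ccomp C (h j) x) (ccomp C (dY (j - 1)) w) = zer C T (Y j)"
  shows "ccomp C (d j) (col C (X j) (Y (j - 1)) x w) = zer C T (cone_term (Suc j))"
proof (cases "j = n")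
  case True
  have "col C (X j) (Y (j - 1)) x w \<in> hom C T (bobj C (X n) (Y (n - 1)))"
    using col_hom[OF x w] True by simp
  then have "ccomp C (d n) (col C (X j) (Y (j - 1)) x w) = zer C T (Y n)"
    using d_n_comp bprj1_col[OF x w] bprj2_col[OF x w] hx True by simp
  then show ?thesis using True unfolding cone_term_def by simp
next
  case False
  then have jn: "j < n" using j by simp
  have Ob: "X (Suc j) \<in> Ob C" "Y j \<in> Ob C" using X_ob Y_ob jn by simp_all
  have T: "T \<in> Ob C" using hom_dom_ob[OF x] .
  have dz: "ccomp C (d j) (col C (X j) (Y (j - 1)) x w) \<in> hom C T (bobj C (X (Suc j)) (Y j))"
    using comp_hom[OF col_hom[OF x w] d_hom[OF j(1) jn]] .
  have "ccomp C (bprj1 C (X (Suc j)) (Y j)) (ccomp C (d j) (col C (X j) (Y (j - 1)) x w))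
        = zer C T (X (Suc j))"
    using d_components(1)[OF j(1) jn col_hom[OF x w]] bprj1_col[OF x w] dx[OF jn] neg_zer[OF T Ob(1)]
    by simp
  moreover have "ccomp C (bprj2 C (X (Suc j)) (Y j)) (ccomp C (d j) (col C (X j) (Y (j - 1)) x w))
        = zer C T (Y j)"
    using d_components(2)[OF j(1) jn col_hom[OF x w]] bprj1_col[OF x w] bprj2_col[OF x w] hx by simp
  ultimately have "ccomp C (d j) (col C (X j) (Y (j - 1)) x w) = zer C T (bobj C (X (Suc j)) (Y j))"
    using biproduct_ext[OF Ob dz zer_hom[OF T bobj_ob[OF Ob]]]
      comp_zer_right[OF bprj1_hom[OF Ob] T] comp_zer_right[OF bprj2_hom[OF Ob] T] by simp
  then show ?thesis using jn unfolding cone_term_def by simp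
qed

lemma lifts_locally_bprj1:
  assumes j: "j < n" and z: "z \<in> hom C T (bobj C (X (Suc j)) (Y j))"
    and lift: "lifts_locally (d j) z"
  shows "lifts_locally (dX j) (ccomp C (bprj1 C (X (Suc j)) (Y j)) z)"
proof -
  have z': "z \<in> hom C T (cone_term (Suc j))" using z j unfolding cone_term_def by simp
  obtain T' e w where e: "e \<in> hom C T' T" "is_epi C e" and w: "w \<in> hom C T' (cone_term j)"
    and dw: "ccomp C (d j) w = ccomp C z e"
    using lifts_locallyE[OF lift d_in_hom[OF less_imp_le[OF j]] z'] by blast
  have Ob: "X (Suc j) \<in> Ob C" "Y j \<in> Ob C" using X_ob Y_ob j by simp_all
  have xw: "X_part j w \<in> hom C T' (X j)" using X_part_hom[OF _ w] j by simp
  have "ccomp C (dX j) (mneg C (X_part j w)) = ccomp C (bprj1 C (X (Suc j)) (Y j)) (ccomp C (d j) w)"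
    using bprj1_d[OF j w] comp_neg_right[OF xw dX_hom[OF j]] by simp
  also have "\<dots> = ccomp C (ccomp C (bprj1 C (X (Suc j)) (Y j)) z) e"
    using dw comp_assoc[OF e(1) z bprj1_hom[OF Ob]] by simp
  finally show ?thesis
    using lifts_locallyI[OF e neg_hom[OF xw] dX_hom[OF j] comp_hom[OF z bprj1_hom[OF Ob]]] by blast
qed

lemma dX_comp_dX:
  assumes j: "Suc j < n" and dd: "ccomp C (d (Suc j)) (d j) = zer C (cone_term j) (cone_term (Suc (Suc j)))"
  shows "ccomp C (dX (Suc j)) (dX j) = zer C (X j) (X (Suc (Suc j)))"
proof -
  obtain q where q: "q \<in> hom C (X j) (cone_term j)" and xq: "X_part j q = cid C (X j)"
  proof (cases "j = 0")
    case True
    then show ?thesis using that[of "cid C (X 0)"] id_hom[OF X_ob] unfolding X_part_def cone_term_def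
      by simp
  next
    case False
    then show ?thesis
      using that[of "binj1 C (X j) (Y (j - 1))"] binj1_hom[OF X_ob Y_ob] bprj1_binj1[OF X_ob Y_ob] j
      unfolding X_part_def cone_term_def by simp
  qed
  have dj: "d j \<in> hom C (cone_term j) (cone_term (Suc j))" using d_in_hom j by simp
  have dj1: "d (Suc j) \<in> hom C (cone_term (Suc j)) (cone_term (Suc (Suc j)))" using d_in_hom j by simp
  have dq: "ccomp C (d j) q \<in> hom C (X j) (cone_term (Suc j))" using comp_hom[OF q dj] .
  have dX0: "dX j \<in> hom C (X j) (X (Suc j))" and dX1: "dX (Suc j) \<in> hom C (X (Suc j)) (X (Suc (Suc j)))"
    using dX_hom j by simp_all
  have Ob: "X (Suc (Suc j)) \<in> Ob C" "Y (Suc j) \<in> Ob C" using X_ob Y_ob j by simp_all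
  have X0: "X j \<in> Ob C" using X_ob j by simp
  have "ccomp C (dX (Suc j)) (dX j)
        = mneg C (ccomp C (dX (Suc j)) (X_part (Suc j) (ccomp C (d j) q)))"
    using bprj1_d[OF Suc_lessD[OF j] q] xq comp_id_right[OF dX0] comp_neg_right[OF dX0 dX1]
      neg_neg[OF comp_hom[OF dX0 dX1]] unfolding X_part_def by simp
  also have "\<dots> = ccomp C (bprj1 C (X (Suc (Suc j))) (Y (Suc j))) (ccomp C (d (Suc j)) (ccomp C (d j) q))"
    using bprj1_d[OF j dq] by simp
  also have "ccomp C (d (Suc j)) (ccomp C (d j) q) = zer C (X j) (cone_term (Suc (Suc j)))"
    using comp_assoc[OF q dj dj1, symmetric] dd comp_zer_left[OF q] hom_cod_ob[OF dj1] by simp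
  also have "cone_term (Suc (Suc j)) = bobj C (X (Suc (Suc j))) (Y (Suc j))"
    using j unfolding cone_term_def by simp
  also have "ccomp C (bprj1 C (X (Suc (Suc j))) (Y (Suc j))) (zer C (X j) (bobj C (X (Suc (Suc j))) (Y (Suc j))))
        = zer C (X j) (X (Suc (Suc j)))"
    using comp_zer_right[OF bprj1_hom[OF Ob] X0] .
  finally show ?thesis .
qed

end

section \<open>The tower of complexes\<close>

locale cone_tower = abelian C for C :: "('o, 'm) cat" +
  fixes n :: nat
    and A :: "nat \<Rightarrow> 'o"
    and B :: "nat \<Rightarrow> nat \<Rightarrow> 'o"
    and f :: "nat \<Rightarrow> 'm"
    and g p :: "nat \<Rightarrow> nat \<Rightarrow> 'm"
  assumes n1: "n \<ge> 1"
    and objA: "\<forall>k\<le>Suc n. A k \<in> Ob C"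
    and objB: "\<forall>k\<le>Suc n. \<forall>l\<in>{1..n}. B k l \<in> Ob C"
    and B0: "\<forall>k\<le>Suc n. B k 0 = A k"
    and f_hom: "\<forall>k\<le>n. f k \<in> hom C (A k) (A (Suc k))"
    and g_hom: "\<forall>k\<le>Suc n. \<forall>l\<in>{1..n}. g k l \<in> hom C (B k l) (B k (l - 1))"
    and p_hom: "\<forall>k\<le>n. \<forall>l<n. p k l \<in> hom C (B k l) (B (Suc k) (Suc l))"
    and rel_f: "\<forall>k\<le>n. f k = ccomp C (g (Suc k) 1) (p k 0)"
    and rel_gp: "\<forall>k\<le>n. \<forall>l\<in>{1..n - 1}.
                   ccomp C (g (Suc k) (Suc l)) (p k l) = ccomp C (p k (l - 1)) (g k l)"
    and rel_0: "\<forall>k\<le>n. ccomp C (p k (n - 1)) (g k n) = zer C (B k n) (B (Suc k) n)"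
    and hyp_a: "is_mono C (g (Suc n) n) \<and>
                (\<forall>l\<in>{1..n - 1}. exact C (g (Suc n) (Suc l)) (g (Suc n) l)) \<and>
                is_epi C (g (Suc n) 1)"
    and hyp_b: "\<forall>k\<le>n.
       (let X = (\<lambda>j. B k (n - j));
            dX = (\<lambda>j. g k (n - j));
            Y = (\<lambda>j. if j = 0 then zobj C else B (Suc k) (Suc n - j));
            dY = (\<lambda>j. if j = 0 then zer C (zobj C) (B (Suc k) n) else g (Suc k) (Suc n - j));
            h = (\<lambda>j. if j = 0 then zer C (B k n) (zobj C) else p k (n - j))
        in is_mono C (cone_d C n X Y dX dY h 0) \<and>
           (\<forall>j\<in>{1..n}. exact C (cone_d C n X Y dX dY h (j - 1)) (cone_d C n X Y dX dY h j)))"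
begin

lemma B_ob: "k \<le> Suc n \<Longrightarrow> l \<le> n \<Longrightarrow> B k l \<in> Ob C"
  using objA objB B0 by (cases "l = 0") auto

lemma A_ob: "k \<le> Suc n \<Longrightarrow> A k \<in> Ob C"
  using objA by auto

lemma B_0: "k \<le> Suc n \<Longrightarrow> B k 0 = A k"
  using B0 by auto

lemma g_in_hom: "k \<le> Suc n \<Longrightarrow> 0 < l \<Longrightarrow> l \<le> n \<Longrightarrow> g k l \<in> hom C (B k l) (B k (l - 1))"
  using g_hom by auto

lemma p_in_hom: "k \<le> n \<Longrightarrow> l < n \<Longrightarrow> p k l \<in> hom C (B k l) (B (Suc k) (Suc l))"
  using p_hom by auto

lemma f_in_hom: "k \<le> n \<Longrightarrow> f k \<in> hom C (A k) (A (Suc k))"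
  using f_hom by auto

lemma g1_hom: "k \<le> Suc n \<Longrightarrow> g k 1 \<in> hom C (B k 1) (A k)"
  using g_in_hom[of k 1] n1 B_0[of k] by simp

lemma p0_hom: "k \<le> n \<Longrightarrow> p k 0 \<in> hom C (A k) (B (Suc k) 1)"
  using p_in_hom[of k 0] n1 B_0[of k] by simp

text \<open>The mapping cone of hypothesis (b), with the complexes indexed from the left: position
  \<open>j\<close> carries \<open>B\<^sub>k\<^sup>n\<^sup>-\<^sup>j\<close> in the source and \<open>B\<^sub>k\<^sub>+\<^sub>1\<^sup>n\<^sup>+\<^sup>1\<^sup>-\<^sup>j\<close> (zero for \<open>j = 0\<close>) in the target.\<close>

definition cone_X :: "nat \<Rightarrow> nat \<Rightarrow> 'o" where
  "cone_X k j = B k (n - j)"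

definition cone_dX :: "nat \<Rightarrow> nat \<Rightarrow> 'm" where
  "cone_dX k j = g k (n - j)"

definition cone_Y :: "nat \<Rightarrow> nat \<Rightarrow> 'o" where
  "cone_Y k j = (if j = 0 then zobj C else B (Suc k) (Suc n - j))"

definition cone_dY :: "nat \<Rightarrow> nat \<Rightarrow> 'm" where
  "cone_dY k j = (if j = 0 then zer C (zobj C) (B (Suc k) n) else g (Suc k) (Suc n - j))"

definition cone_h :: "nat \<Rightarrow> nat \<Rightarrow> 'm" where
  "cone_h k j = (if j = 0 then zer C (B k n) (zobj C) else p k (n - j))"

abbreviation cone :: "nat \<Rightarrow> nat \<Rightarrow> 'm" where
  "cone k \<equiv> cone_d C n (cone_X k) (cone_Y k) (cone_dX k) (cone_dY k) (cone_h k)"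

lemma cone_mono: "k \<le> n \<Longrightarrow> is_mono C (cone k 0)"
  using hyp_b unfolding Let_def cone_X_def cone_dX_def cone_Y_def cone_dY_def cone_h_def by auto

lemma cone_exact: "k \<le> n \<Longrightarrow> 1 \<le> j \<Longrightarrow> j \<le> n \<Longrightarrow> exact C (cone k (j - 1)) (cone k j)"
  using hyp_b unfolding Let_def cone_X_def cone_dX_def cone_Y_def cone_dY_def cone_h_def by auto

lemma cone_is_mapping_cone:
  assumes k: "k \<le> n"
  shows "mapping_cone C n (cone_X k) (cone_Y k) (cone_dX k) (cone_dY k) (cone_h k)"
proof (unfold_locales)
  show "1 \<le> n" using n1 .
  fix j
  show "j \<le> n \<Longrightarrow> cone_X k j \<in> Ob C" unfolding cone_X_def using B_ob k by simp
  show "j \<le> n \<Longrightarrow> cone_Y k j \<in> Ob C" unfolding cone_Y_def using B_ob k zobj_ob by simp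
  show "j \<le> n \<Longrightarrow> cone_h k j \<in> hom C (cone_X k j) (cone_Y k j)"
    unfolding cone_h_def cone_X_def cone_Y_def
    using zer_hom[OF B_ob[of k n] zobj_ob] p_in_hom[of k "n - j"] k by (simp add: Suc_diff_le)
  show "j < n \<Longrightarrow> cone_dX k j \<in> hom C (cone_X k j) (cone_X k (Suc j))"
    unfolding cone_dX_def cone_X_def using g_in_hom[of k "n - j"] k by (simp add: diff_Suc)
  show "j < n \<Longrightarrow> cone_dY k j \<in> hom C (cone_Y k j) (cone_Y k (Suc j))"
    unfolding cone_dY_def cone_Y_def
    using zer_hom[OF zobj_ob B_ob[of "Suc k" n]] g_in_hom[of "Suc k" "Suc n - j"] k by simp
qed

lemma g_top_eq_zer:
  assumes k: "k \<le> Suc n" and x: "x \<in> hom C T (B k n)"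
    and gx: "ccomp C (g k n) x = zer C T (B k (n - 1))"
  shows "x = zer C T (B k n)"
proof (cases "k = Suc n")
  case True
  have "g (Suc n) n \<in> hom C (B (Suc n) n) (B (Suc n) (n - 1))" using g_in_hom[of "Suc n" n] n1 by simp
  from mono_eq_zer[OF conjunct1[OF hyp_a] this, of x T] show ?thesis using x gx True by simp
next
  case False
  then have k: "k \<le> n" using k by simp
  interpret K: mapping_cone C n "cone_X k" "cone_Y k" "cone_dX k" "cone_dY k" "cone_h k"
    using cone_is_mapping_cone[OF k] .
  have x0: "x \<in> hom C T (cone_X k 0)" using x unfolding cone_X_def by simp
  have "ccomp C (cone_h k 0) x \<in> hom C T (zobj C)"
    using comp_hom[OF x0 K.h_hom[of 0]] unfolding cone_Y_def by simp
  then have "ccomp C (cone_h k 0) x = zer C T (cone_Y k 0)"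
    using hom_to_zobj unfolding cone_Y_def by simp
  moreover have "ccomp C (cone_dX k 0) x = zer C T (cone_X k 1)"
    using gx unfolding cone_dX_def cone_X_def by simp
  ultimately show ?thesis using K.d_0_mono_eq_zer[OF cone_mono[OF k] x0] unfolding cone_X_def by simp
qed

text \<open>Exactness of the cone at \<open>B\<^sub>k\<^sup>l \<oplus> B\<^sub>k\<^sub>+\<^sub>1\<^sup>l\<^sup>+\<^sup>2\<close>: a cycle \<open>x\<close> of \<open>B\<^sub>k\<close> whose image under
  \<open>p\<close> is a boundary is itself a boundary.\<close>

lemma lifts_locally_g_by_cone:
  assumes k: "k \<le> n" and l: "l < n" and x: "x \<in> hom C T (B k l)"
    and gx: "0 < l \<Longrightarrow> ccomp C (g k l) x = zer C T (B k (l - 1))"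
    and y: "y \<in> hom C T (cone_Y k (n - Suc l))"
    and px: "ccomp C (p k l) x = ccomp C (cone_dY k (n - Suc l)) y"
  shows "lifts_locally (g k (Suc l)) x"
proof -
  interpret K: mapping_cone C n "cone_X k" "cone_Y k" "cone_dX k" "cone_dY k" "cone_h k"
    using cone_is_mapping_cone[OF k] .
  define i where "i = n - Suc l"
  have i: "i < n" using i_def l by simp
  have Xi: "cone_X k (Suc i) = B k l" "cone_dX k (Suc i) = g k l" "cone_h k (Suc i) = p k l"
    "cone_dX k i = g k (Suc l)"
    unfolding cone_X_def cone_dX_def cone_h_def using i_def l by auto
  have x': "x \<in> hom C T (cone_X k (Suc i))" using x Xi by simp
  have y': "y \<in> hom C T (cone_Y k i)" using y i_def by simp
  have dY: "cone_dY k i \<in> hom C (cone_Y k i) (cone_Y k (Suc i))" using K.dY_hom[OF i] .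
  have z: "col C (cone_X k (Suc i)) (cone_Y k i) x (mneg C y) \<in> hom C T (K.cone_term (Suc i))"
    using col_hom[OF x' neg_hom[OF y']] K.cone_term_Suc[OF i] by simp
  have "madd C (ccomp C (cone_h k (Suc i)) x) (ccomp C (cone_dY k i) (mneg C y))
        = zer C T (cone_Y k (Suc i))"
    using Xi px i_def comp_neg_right[OF y' dY] add_neg_right[OF comp_hom[OF y' dY]] by simp
  moreover have "ccomp C (cone_dX k (Suc i)) x = zer C T (cone_X k (Suc (Suc i)))" if "Suc i < n"
  proof -
    have "0 < l" "n - Suc (Suc i) = l - 1" using that i_def l by auto
    then show ?thesis using gx Xi(2) unfolding cone_X_def by simp
  qed
  ultimately have "ccomp C (cone k (Suc i)) (col C (cone_X k (Suc i)) (cone_Y k i) x (mneg C y))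
                   = zer C T (K.cone_term (Suc (Suc i)))"
    using K.d_col_eq_zer[OF _ _ x' _] neg_hom[OF y'] i by simp
  moreover have "exact C (cone k i) (cone k (Suc i))" using cone_exact[OF k, of "Suc i"] i by simp
  ultimately have "lifts_locally (cone k i) (col C (cone_X k (Suc i)) (cone_Y k i) x (mneg C y))"
    using lifts_locally_exact[OF _ K.d_in_hom K.d_in_hom z] i by simp
  then have "lifts_locally (cone_dX k i)
               (ccomp C (bprj1 C (cone_X k (Suc i)) (cone_Y k i)) (col C (cone_X k (Suc i)) (cone_Y k i) x (mneg C y)))"
    using K.lifts_locally_bprj1[OF i(1) col_hom[OF x' neg_hom[OF y']]] by blast
  then show ?thesis using bprj1_col[OF x' neg_hom[OF y']] Xi by simp
qed

lemma lifts_locally_g_of_lifts_p: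
  assumes k: "k \<le> n" and l: "l < n" and x: "x \<in> hom C T (B k l)"
    and gx: "0 < l \<Longrightarrow> ccomp C (g k l) x = zer C T (B k (l - 1))"
    and px: "lifts_locally (cone_dY k (n - Suc l)) (ccomp C (p k l) x)"
  shows "lifts_locally (g k (Suc l)) x"
proof -
  interpret K: mapping_cone C n "cone_X k" "cone_Y k" "cone_dX k" "cone_dY k" "cone_h k"
    using cone_is_mapping_cone[OF k] .
  have p: "p k l \<in> hom C (B k l) (B (Suc k) (Suc l))" using p_in_hom k l by simp
  have "cone_Y k (Suc (n - Suc l)) = B (Suc k) (Suc l)" using l unfolding cone_Y_def by simp
  then have dY: "cone_dY k (n - Suc l) \<in> hom C (cone_Y k (n - Suc l)) (B (Suc k) (Suc l))"
    using K.dY_hom[of "n - Suc l"] l by simp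
  obtain T' e y where e: "e \<in> hom C T' T" "is_epi C e" and y: "y \<in> hom C T' (cone_Y k (n - Suc l))"
    and dy: "ccomp C (cone_dY k (n - Suc l)) y = ccomp C (ccomp C (p k l) x) e"
    by (rule lifts_locallyE[OF px dY comp_hom[OF x p]])
  have xe: "ccomp C x e \<in> hom C T' (B k l)" using comp_hom[OF e(1) x] .
  have "ccomp C (g k l) (ccomp C x e) = zer C T' (B k (l - 1))" if "0 < l"
  proof -
    have g: "g k l \<in> hom C (B k l) (B k (l - 1))" using g_in_hom k l that by simp
    show ?thesis
      using comp_assoc[OF e(1) x g, symmetric] gx[OF that] comp_zer_left[OF e(1) hom_cod_ob[OF g]]
      by simp
  qed
  then have "lifts_locally (g k (Suc l)) (ccomp C x e)"
    using lifts_locally_g_by_cone[OF k l xe _ y] dy comp_assoc[OF e(1) x p] by simp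
  moreover have "g k (Suc l) \<in> hom C (B k (Suc l)) (B k l)" using g_in_hom[of k "Suc l"] k l by simp
  ultimately show ?thesis using lifts_locally_cancel_epi[OF e _ x] by blast
qed

lemma g_comp_g:
  assumes k: "k \<le> Suc n" and l: "0 < l" "Suc l \<le> n"
  shows "ccomp C (g k l) (g k (Suc l)) = zer C (B k (Suc l)) (B k (l - 1))"
proof (cases "k = Suc n")
  case True
  have "exact C (g (Suc n) (Suc l)) (g (Suc n) l)" using hyp_a l by auto
  moreover have "g (Suc n) (Suc l) \<in> hom C (B (Suc n) (Suc l)) (B (Suc n) l)"
    and "g (Suc n) l \<in> hom C (B (Suc n) l) (B (Suc n) (l - 1))"
    using g_in_hom[of "Suc n" "Suc l"] g_in_hom[of "Suc n" l] l by simp_all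
  ultimately show ?thesis using exact_comp_zer True by simp
next
  case False
  then have k: "k \<le> n" using k by simp
  interpret K: mapping_cone C n "cone_X k" "cone_Y k" "cone_dX k" "cone_dY k" "cone_h k"
    using cone_is_mapping_cone[OF k] .
  define i where "i = n - Suc l"
  have i: "Suc i < n" using i_def l by simp
  have "exact C (cone k i) (cone k (Suc i))" using cone_exact[OF k, of "Suc i"] i by simp
  then have "ccomp C (cone k (Suc i)) (cone k i) = zer C (K.cone_term i) (K.cone_term (Suc (Suc i)))"
    using exact_comp_zer[OF _ K.d_in_hom K.d_in_hom] i by simp
  then have "ccomp C (cone_dX k (Suc i)) (cone_dX k i) = zer C (cone_X k i) (cone_X k (Suc (Suc i)))"
    using K.dX_comp_dX[OF i] by simp
  moreover have "n - i = Suc l" "n - Suc i = l" "n - Suc (Suc i) = l - 1" using i_def l by auto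
  ultimately show ?thesis unfolding cone_X_def cone_dX_def by simp
qed

lemma lifts_locally_g:
  assumes "k \<le> Suc n" "0 < l" "l < n" "x \<in> hom C T (B k l)"
    "ccomp C (g k l) x = zer C T (B k (l - 1))"
  shows "lifts_locally (g k (Suc l)) x"
  using assms
proof (induct "Suc n - k" arbitrary: k l T x)
  case 0
  then have "exact C (g (Suc n) (Suc l)) (g (Suc n) l)" using hyp_a by auto
  moreover have "g (Suc n) (Suc l) \<in> hom C (B (Suc n) (Suc l)) (B (Suc n) l)"
    and "g (Suc n) l \<in> hom C (B (Suc n) l) (B (Suc n) (l - 1))"
    using g_in_hom[of "Suc n" "Suc l"] g_in_hom[of "Suc n" l] 0 by simp_all
  ultimately show ?case using lifts_locally_exact 0 by simp
next
  case (Suc m)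
  then have k: "k \<le> n" and l: "0 < l" "l < n" and x: "x \<in> hom C T (B k l)" by auto
  have p: "p k l \<in> hom C (B k l) (B (Suc k) (Suc l))" using p_in_hom k l by simp
  have g: "g k l \<in> hom C (B k l) (B k (l - 1))" using g_in_hom k l by simp
  have p': "p k (l - 1) \<in> hom C (B k (l - 1)) (B (Suc k) l)" using p_in_hom[of k "l - 1"] k l by simp
  have "ccomp C (g (Suc k) (Suc l)) (ccomp C (p k l) x) = ccomp C (p k (l - 1)) (ccomp C (g k l) x)"
    using comp_assoc[OF x p g_in_hom[of "Suc k" "Suc l"], symmetric] rel_gp comp_assoc[OF x g p'] k l
    by simp
  also have "\<dots> = zer C T (B (Suc k) l)" using Suc.prems(5) comp_zer_right[OF p' hom_dom_ob[OF x]] by simp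
  finally have gpx: "ccomp C (g (Suc k) (Suc l)) (ccomp C (p k l) x) = zer C T (B (Suc k) (Suc l - 1))"
    by simp
  have "lifts_locally (cone_dY k (n - Suc l)) (ccomp C (p k l) x)"
  proof (cases "Suc l = n")
    case True
    then have "ccomp C (p k l) x = zer C T (B (Suc k) n)"
      using g_top_eq_zer[of "Suc k" "ccomp C (p k l) x"] comp_hom[OF x p] gpx k by simp
    then show ?thesis
      using lifts_locally_zer[OF zer_hom[OF zobj_ob B_ob] hom_dom_ob[OF x]] True k
      unfolding cone_dY_def by simp
  next
    case False
    then show ?thesis
      using Suc.hyps(1)[of "Suc k" "Suc l" "ccomp C (p k l) x" T] Suc.hyps(2) comp_hom[OF x p] gpx k l
      unfolding cone_dY_def by (simp add: Suc_diff_Suc)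
  qed
  then show ?case using lifts_locally_g_of_lifts_p[OF k l(2) x] Suc.prems(5) by simp
qed

definition B2 :: "nat \<Rightarrow> 'o" where
  "B2 k = (if n = 1 then zobj C else B k 2)"

definition g2 :: "nat \<Rightarrow> 'm" where
  "g2 k = (if n = 1 then zer C (zobj C) (B k 1) else g k 2)"

lemma cone_dY_g2: "cone_dY k (n - 1) = g2 (Suc k)"
  unfolding cone_dY_def g2_def using n1 by (auto simp: numeral_2_eq_2 Suc_diff_Suc)

lemma g2_hom: "k \<le> Suc n \<Longrightarrow> g2 k \<in> hom C (B2 k) (B k 1)"
  unfolding g2_def B2_def using zer_hom[OF zobj_ob B_ob[of k 1]] g_in_hom[of k 2] n1 by auto

lemma g1_comp_g2: "k \<le> Suc n \<Longrightarrow> ccomp C (g k 1) (g2 k) = zer C (B2 k) (A k)"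
  unfolding g2_def B2_def
  using comp_zer_right[OF g1_hom zobj_ob] g_comp_g[of k 1] n1 B_0[of k] by (auto simp: numeral_2_eq_2)

lemma lifts_locally_g2:
  assumes k: "k \<le> Suc n" and x: "x \<in> hom C T (B k 1)" and gx: "ccomp C (g k 1) x = zer C T (A k)"
  shows "lifts_locally (g2 k) x"
proof (cases "n = 1")
  case True
  then have "x = zer C T (B k 1)" using g_top_eq_zer[OF k] x gx B_0[OF k] by simp
  then show ?thesis using lifts_locally_zer[OF g2_hom[OF k] hom_dom_ob[OF x]] by simp
next
  case False
  then show ?thesis
    using lifts_locally_g[OF k _ _ x] gx n1 B_0[OF k] unfolding g2_def by (simp add: numeral_2_eq_2)
qed

definition pg_row :: "nat \<Rightarrow> 'm" where
  "pg_row k = row C (A k) (B2 (Suc k)) (p k 0) (g2 (Suc k))"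

lemma pg_row_hom: "k \<le> n \<Longrightarrow> pg_row k \<in> hom C (bobj C (A k) (B2 (Suc k))) (B (Suc k) 1)"
  unfolding pg_row_def using row_hom[OF p0_hom g2_hom] by simp

lemma lifts_locally_pg_row:
  assumes k: "k \<le> n" and b: "b \<in> hom C T (B (Suc k) 1)"
    and lift: "lifts_locally (f k) (ccomp C (g (Suc k) 1) b)"
  shows "lifts_locally (pg_row k) b"
proof -
  have g1: "g (Suc k) 1 \<in> hom C (B (Suc k) 1) (A (Suc k))" using g1_hom k by simp
  obtain T1 e a where e: "e \<in> hom C T1 T" "is_epi C e" and a: "a \<in> hom C T1 (A k)"
    and fa: "ccomp C (f k) a = ccomp C (ccomp C (g (Suc k) 1) b) e"
    using lifts_locallyE[OF lift f_in_hom[OF k] comp_hom[OF b g1]] by blast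
  have be: "ccomp C b e \<in> hom C T1 (B (Suc k) 1)" using comp_hom[OF e(1) b] .
  have pa: "ccomp C (p k 0) a \<in> hom C T1 (B (Suc k) 1)" using comp_hom[OF a p0_hom[OF k]] .
  define d where "d = madd C (ccomp C b e) (mneg C (ccomp C (p k 0) a))"
  have dh: "d \<in> hom C T1 (B (Suc k) 1)" unfolding d_def using add_hom[OF be neg_hom[OF pa]] .
  have "ccomp C (g (Suc k) 1) d = madd C (ccomp C (f k) a) (mneg C (ccomp C (f k) a))"
    unfolding d_def
    using comp_add_left[OF be neg_hom[OF pa] g1] comp_neg_right[OF pa g1] fa comp_assoc[OF e(1) b g1]
      comp_assoc[OF a p0_hom[OF k] g1, symmetric] rel_f k by simp
  then have "ccomp C (g (Suc k) 1) d = zer C T1 (A (Suc k))"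
    using add_neg_right[OF comp_hom[OF a f_in_hom[OF k]]] by simp
  then have "lifts_locally (g2 (Suc k)) d" using lifts_locally_g2[of "Suc k" d T1] k dh by simp
  then obtain T2 e2 y where e2: "e2 \<in> hom C T2 T1" "is_epi C e2" and y: "y \<in> hom C T2 (B2 (Suc k))"
    and gy: "ccomp C (g2 (Suc k)) y = ccomp C d e2"
    using lifts_locallyE[OF _ g2_hom[OF Suc_le_mono[THEN iffD2, OF k]] dh] by blast
  have "madd C (ccomp C (ccomp C b e) e2) (mneg C (ccomp C (p k 0) (ccomp C a e2))) = ccomp C (g2 (Suc k)) y"
    using gy unfolding d_def
    using comp_add_right[OF e2(1) be neg_hom[OF pa]] comp_neg_left[OF e2(1) pa]
      comp_assoc[OF e2(1) a p0_hom[OF k]] by simp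
  then have "ccomp C (ccomp C b e) e2 = madd C (ccomp C (p k 0) (ccomp C a e2)) (ccomp C (g2 (Suc k)) y)"
    using eq_add_of_add_neg_eq[OF comp_hom[OF e2(1) be] comp_hom[OF comp_hom[OF e2(1) a] p0_hom[OF k]]]
    by simp
  then have "lifts_locally (pg_row k) (ccomp C b e)"
    unfolding pg_row_def
    using lifts_locally_rowI[OF e2 p0_hom[OF k] g2_hom be comp_hom[OF e2(1) a] y] k by simp
  then show ?thesis using lifts_locally_cancel_epi[OF e pg_row_hom[OF k] b] by simp
qed

lemma lifts_locally_f_of_pg_row:
  assumes k: "k \<le> n" and b: "b \<in> hom C T (B (Suc k) 1)" and lift: "lifts_locally (pg_row k) b"
  shows "lifts_locally (f k) (ccomp C (g (Suc k) 1) b)"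
proof -
  have g1: "g (Suc k) 1 \<in> hom C (B (Suc k) 1) (A (Suc k))" using g1_hom k by simp
  have g2: "g2 (Suc k) \<in> hom C (B2 (Suc k)) (B (Suc k) 1)" using g2_hom k by simp
  obtain T' e a y where e: "e \<in> hom C T' T" "is_epi C e" and a: "a \<in> hom C T' (A k)"
    and y: "y \<in> hom C T' (B2 (Suc k))"
    and be: "ccomp C b e = madd C (ccomp C (p k 0) a) (ccomp C (g2 (Suc k)) y)"
    by (rule lifts_locally_rowE[OF lift[unfolded pg_row_def] p0_hom[OF k] g2 b])
  have pa: "ccomp C (p k 0) a \<in> hom C T' (B (Suc k) 1)" using comp_hom[OF a p0_hom[OF k]] .
  have gy: "ccomp C (g2 (Suc k)) y \<in> hom C T' (B (Suc k) 1)" using comp_hom[OF y g2] .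
  have "ccomp C (ccomp C (g (Suc k) 1) b) e = ccomp C (g (Suc k) 1) (ccomp C b e)"
    using comp_assoc[OF e(1) b g1] .
  also have "\<dots> = madd C (ccomp C (g (Suc k) 1) (ccomp C (p k 0) a))
                         (ccomp C (g (Suc k) 1) (ccomp C (g2 (Suc k)) y))"
    using be comp_add_left[OF pa gy g1] by simp
  also have "ccomp C (g (Suc k) 1) (ccomp C (p k 0) a) = ccomp C (f k) a"
    using comp_assoc[OF a p0_hom[OF k] g1, symmetric] rel_f k by simp
  also have "ccomp C (g (Suc k) 1) (ccomp C (g2 (Suc k)) y) = zer C T' (A (Suc k))"
    using comp_assoc[OF y g2 g1, symmetric] g1_comp_g2[of "Suc k"] comp_zer_left[OF y A_ob[of "Suc k"]] k
    by simp
  also have "madd C (ccomp C (f k) a) (zer C T' (A (Suc k))) = ccomp C (f k) a"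
    using add_zer_right[OF comp_hom[OF a f_in_hom[OF k]]] .
  finally show ?thesis using lifts_locallyI[OF e a f_in_hom[OF k] comp_hom[OF b g1]] by simp
qed

lemma f_comp_g1:
  assumes k: "k < n"
  shows "ccomp C (f (Suc k)) (g (Suc k) 1) = zer C (B (Suc k) 1) (A (Suc (Suc k)))"
proof -
  have g1: "g (Suc k) 1 \<in> hom C (B (Suc k) 1) (A (Suc k))" using g1_hom k by simp
  have p: "p (Suc k) 0 \<in> hom C (A (Suc k)) (B (Suc (Suc k)) 1)" using p0_hom k by simp
  have g1': "g (Suc (Suc k)) 1 \<in> hom C (B (Suc (Suc k)) 1) (A (Suc (Suc k)))" using g1_hom k by simp
  have "ccomp C (f (Suc k)) (g (Suc k) 1)
        = ccomp C (g (Suc (Suc k)) 1) (ccomp C (p (Suc k) 0) (g (Suc k) 1))"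
    using rel_f comp_assoc[OF g1 p g1'] k by simp
  also have "\<dots> = zer C (B (Suc k) 1) (A (Suc (Suc k)))"
  proof (cases "n = 1")
    case True
    then have "ccomp C (p (Suc k) 0) (g (Suc k) 1) = zer C (B (Suc k) 1) (B (Suc (Suc k)) 1)"
      using rel_0 k by auto
    then show ?thesis using comp_zer_right[OF g1' B_ob] k by simp
  next
    case False
    then have n2: "2 \<le> n" using n1 by simp
    have p1: "p (Suc k) 1 \<in> hom C (B (Suc k) 1) (B (Suc (Suc k)) 2)"
      using p_in_hom[of "Suc k" 1] k n2 by (simp add: numeral_2_eq_2)
    have g2: "g (Suc (Suc k)) 2 \<in> hom C (B (Suc (Suc k)) 2) (B (Suc (Suc k)) 1)"
      using g_in_hom[of "Suc (Suc k)" 2] k n2 by simp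
    have "ccomp C (p (Suc k) 0) (g (Suc k) 1) = ccomp C (g (Suc (Suc k)) 2) (p (Suc k) 1)"
      using rel_gp k n2 by (auto simp: numeral_2_eq_2)
    moreover have "ccomp C (g (Suc (Suc k)) 1) (g (Suc (Suc k)) 2) = zer C (B (Suc (Suc k)) 2) (A (Suc (Suc k)))"
      using g_comp_g[of "Suc (Suc k)" 1] k n2 B_0[of "Suc (Suc k)"] by (simp add: numeral_2_eq_2)
    ultimately show ?thesis
      using comp_assoc[OF p1 g2 g1', symmetric] comp_zer_left[OF p1 A_ob] k by simp
  qed
  finally show ?thesis .
qed

lemma lifts_locally_g1:
  assumes k: "k < n" and z: "z \<in> hom C T (A (Suc k))"
    and fz: "ccomp C (f (Suc k)) z = zer C T (A (Suc (Suc k)))"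
  shows "lifts_locally (g (Suc k) 1) z"
proof -
  have p: "p (Suc k) 0 \<in> hom C (A (Suc k)) (B (Suc (Suc k)) 1)" using p0_hom k by simp
  have g1: "g (Suc (Suc k)) 1 \<in> hom C (B (Suc (Suc k)) 1) (A (Suc (Suc k)))" using g1_hom k by simp
  have "ccomp C (g (Suc (Suc k)) 1) (ccomp C (p (Suc k) 0) z) = zer C T (A (Suc (Suc k)))"
    using comp_assoc[OF z p g1, symmetric] rel_f fz k by simp
  then have "lifts_locally (g2 (Suc (Suc k))) (ccomp C (p (Suc k) 0) z)"
    using lifts_locally_g2 comp_hom[OF z p] k by simp
  then have "lifts_locally (g (Suc k) (Suc 0)) z"
    using lifts_locally_g_of_lifts_p[of "Suc k" 0 z] z cone_dY_g2[of "Suc k"] B_0[of "Suc k"] k n1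
    by simp
  then show ?thesis by simp
qed

lemma epi_f_iff_epi_pg_row: "is_epi C (f n) \<longleftrightarrow> is_epi C (pg_row n)"
proof -
  have g1: "g (Suc n) 1 \<in> hom C (B (Suc n) 1) (A (Suc n))" using g1_hom by simp
  have "is_epi C (pg_row n)" if epi: "is_epi C (f n)"
    unfolding epi_iff_lifts_locally[OF pg_row_hom[OF order_refl]]
    using lifts_locally_pg_row[OF order_refl] lifts_locally_epi[OF epi f_in_hom[OF order_refl] comp_hom[OF _ g1]]
    by blast
  moreover have "is_epi C (f n)" if epi: "is_epi C (pg_row n)"
    unfolding epi_iff_lifts_locally[OF f_in_hom[OF order_refl]]
  proof (intro allI impI)
    fix T z assume z: "z \<in> hom C T (A (Suc n))"
    show "lifts_locally (f n) z"
    proof (rule lifts_locally_trans[OF g1 f_in_hom[OF order_refl] z])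
      show "lifts_locally (g (Suc n) 1) z" using lifts_locally_epi[OF _ g1 z] hyp_a by blast
      fix T b assume "b \<in> hom C T (B (Suc n) 1)"
      then show "lifts_locally (f n) (ccomp C (g (Suc n) 1) b)"
        using lifts_locally_f_of_pg_row[OF order_refl] lifts_locally_epi[OF epi pg_row_hom[OF order_refl]]
        by blast
    qed
  qed
  ultimately show ?thesis by blast
qed

lemma exact_f_iff_epi_pg_row:
  assumes k: "k < n"
  shows "exact C (f k) (f (Suc k)) \<longleftrightarrow> is_epi C (pg_row k)"
proof -
  have fk: "f k \<in> hom C (A k) (A (Suc k))" and fk1: "f (Suc k) \<in> hom C (A (Suc k)) (A (Suc (Suc k)))"
    using f_in_hom k by simp_all
  have g1: "g (Suc k) 1 \<in> hom C (B (Suc k) 1) (A (Suc k))" using g1_hom k by simp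
  have f_g1_b: "ccomp C (f (Suc k)) (ccomp C (g (Suc k) 1) b) = zer C T (A (Suc (Suc k)))"
    if b: "b \<in> hom C T (B (Suc k) 1)" for T b
    using comp_assoc[OF b g1 fk1, symmetric] f_comp_g1[OF k] comp_zer_left[OF b A_ob] k by simp
  have pg: "pg_row k \<in> hom C (bobj C (A k) (B2 (Suc k))) (B (Suc k) 1)" using pg_row_hom k by simp
  have "is_epi C (pg_row k)" if ex: "exact C (f k) (f (Suc k))"
    unfolding epi_iff_lifts_locally[OF pg] using k
    using lifts_locally_pg_row[of k] lifts_locally_exact[OF ex fk fk1 comp_hom[OF _ g1] f_g1_b] by simp
  moreover have "exact C (f k) (f (Suc k))" if epi: "is_epi C (pg_row k)"
  proof (rule exactI[OF fk fk1])
    show "ccomp C (f (Suc k)) (f k) = zer C (A k) (A (Suc (Suc k)))"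
      using f_g1_b[OF p0_hom] rel_f k by simp
    fix T z assume z: "z \<in> hom C T (A (Suc k))" and fz: "ccomp C (f (Suc k)) z = zer C T (A (Suc (Suc k)))"
    show "lifts_locally (f k) z"
    proof (rule lifts_locally_trans[OF g1 fk z lifts_locally_g1[OF k z fz]])
      fix T b assume "b \<in> hom C T (B (Suc k) 1)"
      then show "lifts_locally (f k) (ccomp C (g (Suc k) 1) b)"
        using lifts_locally_f_of_pg_row lifts_locally_epi[OF epi pg] k by simp
    qed
  qed
  ultimately show ?thesis by blast
qed

lemma exact_and_epi_iff_epi_pg_row:
  "((\<forall>j\<in>{1..n}. exact C (f (j - 1)) (f j)) \<and> is_epi C (f n)) \<longleftrightarrow> (\<forall>k\<le>n. is_epi C (pg_row k))"
proof -
  have "(\<forall>j\<in>{1..n}. exact C (f (j - 1)) (f j)) \<longleftrightarrow> (\<forall>k<n. exact C (f k) (f (Suc k)))"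
  proof
    assume exact: "\<forall>j\<in>{1..n}. exact C (f (j - 1)) (f j)"
    show "\<forall>k<n. exact C (f k) (f (Suc k))"
      using exact[rule_format, of "Suc _"] by simp
  next
    assume exact: "\<forall>k<n. exact C (f k) (f (Suc k))"
    show "\<forall>j\<in>{1..n}. exact C (f (j - 1)) (f j)"
    proof
      fix j assume "j \<in> {1..n}"
      then have "j - 1 < n" "Suc (j - 1) = j" by auto
      then show "exact C (f (j - 1)) (f j)" using exact[rule_format, of "j - 1"] by simp
    qed
  qed
  also have "\<dots> \<longleftrightarrow> (\<forall>k<n. is_epi C (pg_row k))" using exact_f_iff_epi_pg_row by simp
  finally show ?thesis using epi_f_iff_epi_pg_row by (auto simp: le_less)
qed

end

theorem mainTheorem2:
  fixes C :: "('o, 'm) cat"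
    and n :: nat
    and A :: "nat \<Rightarrow> 'o"
    and B :: "nat \<Rightarrow> nat \<Rightarrow> 'o"
    and f :: "nat \<Rightarrow> 'm"
    and g p :: "nat \<Rightarrow> nat \<Rightarrow> 'm"
  assumes abel: "abelian_category C"
    and n1: "n \<ge> 1"
    and objA: "\<forall>k\<le>Suc n. A k \<in> Ob C"
    and objB: "\<forall>k\<le>Suc n. \<forall>l\<in>{1..n}. B k l \<in> Ob C"
    and B0: "\<forall>k\<le>Suc n. B k 0 = A k"
    and f_hom: "\<forall>k\<le>n. f k \<in> hom C (A k) (A (Suc k))"
    and g_hom: "\<forall>k\<le>Suc n. \<forall>l\<in>{1..n}. g k l \<in> hom C (B k l) (B k (l - 1))"
    and p_hom: "\<forall>k\<le>n. \<forall>l<n. p k l \<in> hom C (B k l) (B (Suc k) (Suc l))"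
    and rel_f: "\<forall>k\<le>n. f k = ccomp C (g (Suc k) 1) (p k 0)"
    and rel_gp: "\<forall>k\<le>n. \<forall>l\<in>{1..n - 1}.
                   ccomp C (g (Suc k) (Suc l)) (p k l) = ccomp C (p k (l - 1)) (g k l)"
    and rel_0: "\<forall>k\<le>n. ccomp C (p k (n - 1)) (g k n) = zer C (B k n) (B (Suc k) n)"
    and hyp_a: "is_mono C (g (Suc n) n) \<and>
                (\<forall>l\<in>{1..n - 1}. exact C (g (Suc n) (Suc l)) (g (Suc n) l)) \<and>
                is_epi C (g (Suc n) 1)"
    and hyp_b: "\<forall>k\<le>n.
       (let X = (\<lambda>j. B k (n - j));
            dX = (\<lambda>j. g k (n - j));
            Y = (\<lambda>j. if j = 0 then zobj C else B (Suc k) (Suc n - j));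
            dY = (\<lambda>j. if j = 0 then zer C (zobj C) (B (Suc k) n) else g (Suc k) (Suc n - j));
            h = (\<lambda>j. if j = 0 then zer C (B k n) (zobj C) else p k (n - j))
        in is_mono C (cone_d C n X Y dX dY h 0) \<and>
           (\<forall>j\<in>{1..n}. exact C (cone_d C n X Y dX dY h (j - 1)) (cone_d C n X Y dX dY h j)))"
  shows "((\<forall>j\<in>{1..n}. exact C (f (j - 1)) (f j)) \<and> is_epi C (f n)) \<longleftrightarrow>
         (\<forall>k\<le>n. is_epi C (row C (A k) (if n = 1 then zobj C else B (Suc k) 2)
                             (p k 0)
                             (if n = 1 then zer C (zobj C) (B (Suc k) 1) else g (Suc k) 2)))"
proof -
  interpret cone_tower C n A B f g p
    using abel n1 objA objB B0 f_hom g_hom p_hom rel_f rel_gp rel_0 hyp_a hyp_b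
    by (intro cone_tower.intro abelian.intro cone_tower_axioms.intro)
  show ?thesis
    using exact_and_epi_iff_epi_pg_row unfolding pg_row_def B2_def g2_def by simp
qed

end
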